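(* Let $w\ge 0$ be an even integer, let $\varphi_1,\dots,\varphi_r$ be a basis of the space of cusp forms of weight $w+2$ for $PSL(2,\mathbb{Z})$, and let $A_1,\dots,A_r$ be non-commuting associative formal variables. For $(p,q)\in W$ put $\Omega(p,q):=\sum_{j=1}^r A_j\varphi_j(z)(pz-q)^w\,dz$, and define $$f(p,q):=J_0^{i\infty}(\Omega(p,q)),\qquad \mathcal{D}(p,q):=J_{q/p}^{i\infty}(\Omega(p,q)),$$ with values in the multiplicative group $\mathbf{G}:=1+(A_1,\dots,A_r)$ of the ring $\mathbb{C}\langle\langle A_1,\dots,A_r\rangle\rangle$ of non-commutative formal power series. Then $f$ is a $\mathbf{G}$-valued reciprocity function and $\mathcal{D}:W\to\mathbf{G}$ is a generalized $\mathbf{G}$-valued Dedekind symbol with reciprocity function $f$.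
   Context: $W:=\{(p,q)\in\mathbb{Z}\times\mathbb{Z}:\gcd(p,q)=1\}$; for $p=0$, $q/p$ means the cusp $\infty$. For a cusp form $\varphi$ of weight $w+2$ one has $\varphi(z+1)=\varphi(z)$ and $\varphi(-z^{-1})=\varphi(z)z^{w+2}$. For cusps $a,b\in\mathbb{P}^1(\mathbb{Q})$ and such a form-valued 1-form $\Omega$, the iterated integral is $J_a^b(\Omega):=1+\sum_{n\ge1}\int_a^b\Omega(z_1)\int_a^{z_1}\Omega(z_2)\cdots\int_a^{z_{n-1}}\Omega(z_n)$, all integrals taken along the oriented geodesic in the upper half-plane from $a$ to $b$ (so that $J_b^cJ_a^b=J_a^c$). A $\mathbf{G}$-valued reciprocity function is a map $f:W\to\mathbf{G}$ with $f(p,-q)=f(-p,q)$, $f(p,q)f(-q,p)=1$, and $f(p,p+q)f(p+q,q)=f(p,q)$. A generalized $\mathbf{G}$-valued Dedekind symbol with reciprocity function $f$ is a map $\mathcal{D}:W\to\mathbf{G}$ with $\mathcal{D}(p,q)=\mathcal{D}(p,q+p)$, $\mathcal{D}(p,-q)=\mathcal{D}(-p,q)$, and $\mathcal{D}(p,q)\mathcal{D}(q,-p)^{-1}=f(p,q)$. *)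

theory Defs
  imports "HOL-Analysis.Analysis"
begin

definition upper_half :: "complex set" where
  "upper_half = {z. Im z > 0}"

definition cusp_form :: "nat \<Rightarrow> (complex \<Rightarrow> complex) \<Rightarrow> bool" where
  "cusp_form k \<phi> \<longleftrightarrow>
     \<phi> holomorphic_on upper_half \<and>
     (\<forall>z\<in>upper_half. \<phi> (z + 1) = \<phi> z) \<and>
     (\<forall>z\<in>upper_half. \<phi> (- inverse z) = \<phi> z * z ^ k) \<and>
     (\<phi> \<longlongrightarrow> 0) (filtercomap Im at_top)"

definition cusp_form_basis :: "nat \<Rightarrow> nat \<Rightarrow> (nat \<Rightarrow> complex \<Rightarrow> complex) \<Rightarrow> bool" where
  "cusp_form_basis k r \<phi> \<longleftrightarrow>
     (\<forall>j<r. cusp_form k (\<phi> j)) \<and>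
     (\<forall>c. (\<forall>z\<in>upper_half. (\<Sum>j<r. c j * \<phi> j z) = 0) \<longrightarrow> (\<forall>j<r. c j = 0)) \<and>
     (\<forall>\<psi>. cusp_form k \<psi> \<longrightarrow> (\<exists>c. \<forall>z\<in>upper_half. \<psi> z = (\<Sum>j<r. c j * \<phi> j z)))"

text \<open>A series is its coefficient function on words (lists of letter indices);
  the word [j1,...,jn] stands for the monomial A_j1 ... A_jn.\<close>
type_synonym ncps = "nat list \<Rightarrow> complex"

definition nc_one :: ncps where
  "nc_one = (\<lambda>ws. if ws = [] then 1 else 0)"

definition nc_mult :: "ncps \<Rightarrow> ncps \<Rightarrow> ncps" where
  "nc_mult a b = (\<lambda>ws. \<Sum>i\<le>length ws. a (take i ws) * b (drop i ws))"

definition nc_inverse :: "ncps \<Rightarrow> ncps" where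
  "nc_inverse a = (THE b. nc_mult a b = nc_one \<and> nc_mult b a = nc_one)"

definition nc_group :: "nat \<Rightarrow> ncps set" where
  "nc_group r = {a. a [] = 1 \<and> (\<forall>ws. \<not> set ws \<subseteq> {..<r} \<longrightarrow> a ws = 0)}"

definition W :: "(int \<times> int) set" where
  "W = {(p, q). coprime p q}"

definition reciprocity_function :: "nat \<Rightarrow> (int \<Rightarrow> int \<Rightarrow> ncps) \<Rightarrow> bool" where
  "reciprocity_function r f \<longleftrightarrow>
     (\<forall>(p, q)\<in>W. f p q \<in> nc_group r) \<and>
     (\<forall>(p, q)\<in>W. f p (- q) = f (- p) q) \<and>
     (\<forall>(p, q)\<in>W. nc_mult (f p q) (f (- q) p) = nc_one) \<and>
     (\<forall>(p, q)\<in>W. nc_mult (f p (p + q)) (f (p + q) q) = f p q)"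

definition dedekind_symbol :: "nat \<Rightarrow> (int \<Rightarrow> int \<Rightarrow> ncps) \<Rightarrow> (int \<Rightarrow> int \<Rightarrow> ncps) \<Rightarrow> bool" where
  "dedekind_symbol r f D \<longleftrightarrow>
     (\<forall>(p, q)\<in>W. D p q \<in> nc_group r) \<and>
     (\<forall>(p, q)\<in>W. D p q = D p (q + p)) \<and>
     (\<forall>(p, q)\<in>W. D p (- q) = D (- p) q) \<and>
     (\<forall>(p, q)\<in>W. nc_mult (D p q) (nc_inverse (D q (- p))) = f p q)"

text \<open>The geodesic from a real cusp x to i infinity is the vertical ray z = x + i s, s from 0 to infinity.
  vert_iter om x ws t is the iterated integral from x to x + i t for the word ws;
  om j is the coefficient 1-form of A_j (dz = i ds).\<close>
fun vert_iter :: "(nat \<Rightarrow> complex \<Rightarrow> complex) \<Rightarrow> real \<Rightarrow> nat list \<Rightarrow> real \<Rightarrow> complex" where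
  "vert_iter om x [] t = 1"
| "vert_iter om x (j # ws) t =
     integral {0..t} (\<lambda>s. om j (Complex x s) * vert_iter om x ws s * \<i>)"

definition J_to_infty :: "(nat \<Rightarrow> complex \<Rightarrow> complex) \<Rightarrow> real \<Rightarrow> ncps" where
  "J_to_infty om x = (\<lambda>ws. Lim at_top (\<lambda>t. vert_iter om x ws t))"

definition Omega :: "(nat \<Rightarrow> complex \<Rightarrow> complex) \<Rightarrow> nat \<Rightarrow> nat \<Rightarrow> int \<Rightarrow> int \<Rightarrow> nat \<Rightarrow> complex \<Rightarrow> complex" where
  "Omega \<phi> r w p q = (\<lambda>j z. if j < r then \<phi> j z * (of_int p * z - of_int q) ^ w else 0)"

definition recip_f :: "(nat \<Rightarrow> complex \<Rightarrow> complex) \<Rightarrow> nat \<Rightarrow> nat \<Rightarrow> int \<Rightarrow> int \<Rightarrow> ncps" where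
  "recip_f \<phi> r w p q = J_to_infty (Omega \<phi> r w p q) 0"

text \<open>For p = 0 the cusp q/p is infinity = i infinity, so the iterated integral is trivial (= 1).\<close>
definition dedekind_D :: "(nat \<Rightarrow> complex \<Rightarrow> complex) \<Rightarrow> nat \<Rightarrow> nat \<Rightarrow> int \<Rightarrow> int \<Rightarrow> ncps" where
  "dedekind_D \<phi> r w p q =
     (if p = 0 then nc_one else J_to_infty (Omega \<phi> r w p q) (of_int q / of_int p))"

end

theory Submission
  imports Defs "HOL-Complex_Analysis.Complex_Analysis"
begin

text \<open>
  For a family \<open>\<omega>\<close> of holomorphic 1-forms on the upper half-plane, the iterated primitives
  \<open>G\<^sub>a\<close> based at a point \<open>a\<close> are the solution of \<open>dG(j # ws) = \<omega>\<^sub>j G(ws)\<close> with \<open>G(a) = 1\<close>.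
  Uniqueness of this solution gives Chen's relation \<open>G\<^sub>b(z) = G\<^sub>a(z) G\<^sub>b(a)\<close> and, since
  \<open>\<Omega>(p,q)\<close> pulls back under \<open>\<gamma> \<in> SL(2,\<int>)\<close> to \<open>\<Omega>((p,q)\<gamma>)\<close> (cusp forms of even weight
  are invariant under the whole modular group), a transformation rule under Moebius maps.
  Cusp forms decay like \<open>exp(-2\<pi> Im z)\<close>, so \<open>G\<^sub>a\<close> has a limit \<open>\<Lambda>\<^sub>a\<close> at \<open>i\<infinity>\<close>. A matrix
  \<open>\<gamma>\<close> with first column \<open>(q,p)\<close> carries \<open>i\<infinity>\<close> to \<open>q/p\<close>, which expresses the iterated
  integral from \<open>q/p\<close> to \<open>i\<infinity>\<close> as \<open>\<Lambda>\<^sub>\<gamma>\<^sub>c(p,q) \<Lambda>\<^sub>c((p,q)\<gamma>)\<^sup>-\<^sup>1\<close>, and every axiom of a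
  reciprocity function and of a Dedekind symbol becomes an identity between such products.
\<close>

section \<open>The group of non-commutative power series with constant term 1\<close>

definition nc_shift :: "ncps \<Rightarrow> nat \<Rightarrow> ncps" where
  "nc_shift a j = (\<lambda>v. a (j # v))"

lemma nc_mult_Nil [simp]: "nc_mult a b [] = a [] * b []"
  by (simp add: nc_mult_def)

lemma nc_mult_Cons:
  "nc_mult a b (j # ws) = a [] * b (j # ws) + nc_mult (nc_shift a j) b ws"
  unfolding nc_mult_def nc_shift_def
  by (simp add: sum.atMost_Suc_shift del: sum.atMost_Suc)

lemma nc_mult_one_left [simp]: "nc_mult nc_one a = a"
proof
  fix ws
  have "nc_mult nc_one a ws = (\<Sum>i\<le>length ws. if i = 0 then a ws else 0)"
    unfolding nc_mult_def nc_one_def by (intro sum.cong) auto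
  then show "nc_mult nc_one a ws = a ws" by simp
qed

lemma nc_mult_one_right [simp]: "nc_mult a nc_one = a"
proof
  fix ws
  have "nc_mult a nc_one ws = (\<Sum>i\<le>length ws. if i = length ws then a ws else 0)"
    unfolding nc_mult_def nc_one_def by (intro sum.cong) auto
  then show "nc_mult a nc_one ws = a ws" by simp
qed

lemma nc_mult_linear_left:
  "nc_mult (\<lambda>v. c * a v + b v) d ws = c * nc_mult a d ws + nc_mult b d ws"
  unfolding nc_mult_def by (simp add: algebra_simps sum.distrib sum_distrib_left)

lemma nc_mult_assoc: "nc_mult (nc_mult a b) c = nc_mult a (nc_mult b c)"
proof
  fix ws show "nc_mult (nc_mult a b) c ws = nc_mult a (nc_mult b c) ws"
  proof (induction ws arbitrary: a b c)
    case Nil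
    then show ?case by simp
  next
    case (Cons j ws)
    have shift: "nc_shift (nc_mult a b) j = (\<lambda>v. a [] * nc_shift b j v + nc_mult (nc_shift a j) b v)"
      by (rule ext) (simp add: nc_shift_def nc_mult_Cons)
    have "nc_mult (nc_mult a b) c (j # ws) =
        a [] * b [] * c (j # ws) + (a [] * nc_mult (nc_shift b j) c ws + nc_mult (nc_mult (nc_shift a j) b) c ws)"
      by (simp add: nc_mult_Cons shift nc_mult_linear_left)
    also have "\<dots> = a [] * nc_mult b c (j # ws) + nc_mult (nc_shift a j) (nc_mult b c) ws"
      by (simp add: Cons nc_mult_Cons algebra_simps)
    also have "\<dots> = nc_mult a (nc_mult b c) (j # ws)"
      by (simp add: nc_mult_Cons)
    finally show ?case .
  qed
qed

text \<open>Solving \<open>nc_mult a b = nc_one\<close> coefficient by coefficient, by recursion on the word length.\<close>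
function nc_right_inverse :: "ncps \<Rightarrow> nat list \<Rightarrow> complex" where
  "nc_right_inverse a [] = 1"
| "nc_right_inverse a (j # ws) =
     - (\<Sum>i\<le>length ws. a (j # take i ws) * nc_right_inverse a (drop i ws))"
  by pat_completeness auto
termination by (relation "Wellfounded.measure (\<lambda>(a, ws). length ws)") auto

lemma nc_mult_right_inverse:
  assumes "a [] = 1"
  shows "nc_mult a (nc_right_inverse a) = nc_one"
proof
  fix ws show "nc_mult a (nc_right_inverse a) ws = nc_one ws"
    by (cases ws) (simp_all add: nc_mult_Cons assms nc_one_def, simp add: nc_mult_def nc_shift_def)
qed

lemma nc_inverse_unique:
  assumes "nc_mult a b = nc_one" "nc_mult b a = nc_one"
  shows "nc_inverse a = b"
  unfolding nc_inverse_def
proof (rule the_equality)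
  fix c assume c: "nc_mult a c = nc_one \<and> nc_mult c a = nc_one"
  have "c = nc_mult (nc_mult b a) c" by (simp add: assms)
  also have "\<dots> = b" by (simp add: nc_mult_assoc c)
  finally show "c = b" .
qed (use assms in auto)

lemma nc_inverse:
  assumes "a [] = 1"
  shows "nc_mult a (nc_inverse a) = nc_one" "nc_mult (nc_inverse a) a = nc_one"
proof -
  let ?b = "nc_right_inverse a"
  have ab: "nc_mult a ?b = nc_one" by (rule nc_mult_right_inverse[of a, OF assms])
  have b: "nc_mult ?b (nc_right_inverse ?b) = nc_one" by (rule nc_mult_right_inverse) simp
  have "a = nc_mult a (nc_mult ?b (nc_right_inverse ?b))" by (simp add: b)
  also have "\<dots> = nc_right_inverse ?b" by (simp add: nc_mult_assoc[symmetric] ab)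
  finally have ba: "nc_mult ?b a = nc_one" using b by simp
  then have "nc_inverse a = ?b" using nc_inverse_unique ab by blast
  then show "nc_mult a (nc_inverse a) = nc_one" "nc_mult (nc_inverse a) a = nc_one"
    using ab ba by simp_all
qed

lemma nc_inverse_Nil: "a [] = 1 \<Longrightarrow> nc_inverse a [] = 1"
  using nc_inverse(1)[of a] by (metis mult_1 nc_mult_Nil nc_one_def)

lemma nc_inverse_one [simp]: "nc_inverse nc_one = nc_one"
  by (rule nc_inverse_unique) simp_all

lemma nc_inverse_mult:
  assumes "a [] = 1" "b [] = 1"
  shows "nc_inverse (nc_mult a b) = nc_mult (nc_inverse b) (nc_inverse a)"
proof (rule nc_inverse_unique)
  show "nc_mult (nc_mult a b) (nc_mult (nc_inverse b) (nc_inverse a)) = nc_one"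
    by (metis assms nc_inverse(1) nc_mult_assoc nc_mult_one_left)
  show "nc_mult (nc_mult (nc_inverse b) (nc_inverse a)) (nc_mult a b) = nc_one"
    by (metis assms nc_inverse(2) nc_mult_assoc nc_mult_one_left)
qed

lemma nc_inverse_inverse: "a [] = 1 \<Longrightarrow> nc_inverse (nc_inverse a) = a"
  by (intro nc_inverse_unique) (auto simp: nc_inverse)

lemma nc_mult_cancel_inverse: "b [] = 1 \<Longrightarrow> nc_mult b (nc_mult (nc_inverse b) c) = c"
  by (simp add: nc_mult_assoc[symmetric] nc_inverse)

lemma nc_mult_inverse_cancel: "b [] = 1 \<Longrightarrow> nc_mult (nc_inverse b) (nc_mult b c) = c"
  by (simp add: nc_mult_assoc[symmetric] nc_inverse)

lemma nc_one_in_group: "nc_one \<in> nc_group r"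
  by (auto simp: nc_group_def nc_one_def)

lemma tendsto_nc_mult:
  assumes "\<And>ws. ((\<lambda>t. a t ws) \<longlongrightarrow> A ws) F" "\<And>ws. ((\<lambda>t. b t ws) \<longlongrightarrow> B ws) F"
  shows "((\<lambda>t. nc_mult (a t) (b t) ws) \<longlongrightarrow> nc_mult A B ws) F"
  unfolding nc_mult_def by (intro tendsto_intros assms)

lemma norm_nc_mult_le_power:
  fixes \<alpha> \<beta> :: real
  assumes "\<And>v. cmod (a v) \<le> \<alpha> ^ length v" "\<And>v. cmod (b v) \<le> \<beta> ^ length v" "\<alpha> \<ge> 0" "\<beta> \<ge> 0"
  shows "cmod (nc_mult a b ws) \<le> (\<alpha> + \<beta>) ^ length ws"
proof -
  let ?n = "length ws"
  have "cmod (nc_mult a b ws) \<le> (\<Sum>i\<le>?n. cmod (a (take i ws) * b (drop i ws)))"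
    unfolding nc_mult_def by (rule norm_sum)
  also have "\<dots> \<le> (\<Sum>i\<le>?n. of_nat (?n choose i) * \<alpha> ^ i * \<beta> ^ (?n - i))"
  proof (rule sum_mono)
    fix i assume i: "i \<in> {..?n}"
    have "cmod (a (take i ws) * b (drop i ws)) \<le> \<alpha> ^ i * \<beta> ^ (?n - i)"
      unfolding norm_mult using assms(1)[of "take i ws"] assms(2)[of "drop i ws"] i
      by (intro mult_mono) (auto simp: assms(3))
    also have "\<dots> \<le> of_nat (?n choose i) * (\<alpha> ^ i * \<beta> ^ (?n - i))"
    proof -
      have "1 \<le> real (?n choose i)" using i by (simp add: Suc_le_eq)
      from mult_right_mono[OF this, of "\<alpha> ^ i * \<beta> ^ (?n - i)"] show ?thesis
        using assms(3,4) by simp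
    qed
    finally show "cmod (a (take i ws) * b (drop i ws)) \<le> of_nat (?n choose i) * \<alpha> ^ i * \<beta> ^ (?n - i)"
      by (simp add: mult.assoc)
  qed
  also have "\<dots> = (\<alpha> + \<beta>) ^ ?n"
    by (simp add: binomial_ring atMost_atLeast0)
  finally show ?thesis .
qed

section \<open>The action of SL(2,Z) on the upper half-plane\<close>

lemma open_upper_half: "open upper_half"
  unfolding upper_half_def using open_halfspace_Im_gt[of 0] by simp

lemma convex_upper_half: "convex upper_half"
  unfolding upper_half_def using convex_halfspace_Im_gt[of 0] by simp

lemma mem_upper_half_iff: "z \<in> upper_half \<longleftrightarrow> Im z > 0"
  by (simp add: upper_half_def)

lemma Complex_in_upper_half: "s > 0 \<Longrightarrow> Complex x s \<in> upper_half"
  by (simp add: mem_upper_half_iff)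

lemma ii_in_upper_half: "\<i> \<in> upper_half"
  by (simp add: mem_upper_half_iff)

definition moebius :: "int \<Rightarrow> int \<Rightarrow> int \<Rightarrow> int \<Rightarrow> complex \<Rightarrow> complex" where
  "moebius a b c d z = (of_int a * z + of_int b) / (of_int c * z + of_int d)"

lemma moebius_denom_nonzero:
  assumes "a * d - b * c = 1" "z \<in> upper_half"
  shows "of_int c * z + of_int d \<noteq> (0::complex)"
proof
  assume h: "of_int c * z + of_int d = (0::complex)"
  have "Im (of_int c * z + of_int d) = of_int c * Im z" by simp
  then have "c = 0" using h assms(2) by (simp add: mem_upper_half_iff)
  then show False using h assms(1) by simp
qed

lemma Im_moebius:
  assumes "a * d - b * c = 1"
  shows "Im (moebius a b c d z) = Im z / (cmod (of_int c * z + of_int d))\<^sup>2"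
proof -
  have "Im (moebius a b c d z) = (Im (of_int a * z + of_int b) * Re (of_int c * z + of_int d)
     - Re (of_int a * z + of_int b) * Im (of_int c * z + of_int d)) / (cmod (of_int c * z + of_int d))\<^sup>2"
    unfolding moebius_def by (rule Im_divide')
  also have "Im (of_int a * z + of_int b) * Re (of_int c * z + of_int d)
     - Re (of_int a * z + of_int b) * Im (of_int c * z + of_int d) = of_int (a * d - b * c) * Im z"
    by (simp add: algebra_simps)
  finally show ?thesis using assms by simp
qed

lemma moebius_in_upper_half:
  assumes "a * d - b * c = 1" "z \<in> upper_half"
  shows "moebius a b c d z \<in> upper_half"
  using assms moebius_denom_nonzero[OF assms] by (auto simp: mem_upper_half_iff Im_moebius)

lemma moebius_denom_cocycle:
  assumes "a' * d' - b' * c' = 1" "z \<in> upper_half"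
  shows "(of_int c * moebius a' b' c' d' z + of_int d) * (of_int c' * z + of_int d') =
         of_int (c*a' + d*c') * z + of_int (c*b' + d*d')"
  using moebius_denom_nonzero[OF assms] unfolding moebius_def
  by (simp add: divide_simps; simp add: algebra_simps)

lemma moebius_compose:
  assumes "a' * d' - b' * c' = 1" "z \<in> upper_half"
  shows "moebius a b c d (moebius a' b' c' d' z) =
         moebius (a*a' + b*c') (a*b' + b*d') (c*a' + d*c') (c*b' + d*d') z"
proof -
  have n: "of_int c' * z + of_int d' \<noteq> 0" by (rule moebius_denom_nonzero[OF assms])
  have num: "(of_int a * moebius a' b' c' d' z + of_int b) * (of_int c' * z + of_int d') =
     of_int (a*a' + b*c') * z + of_int (a*b' + b*d')"
    using n unfolding moebius_def by (simp add: divide_simps; simp add: algebra_simps)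
  have "moebius a b c d (moebius a' b' c' d' z) =
      ((of_int a * moebius a' b' c' d' z + of_int b) * (of_int c' * z + of_int d')) /
      ((of_int c * moebius a' b' c' d' z + of_int d) * (of_int c' * z + of_int d'))"
    using n by (simp add: moebius_def[of a b c d])
  also have "\<dots> = moebius (a*a' + b*c') (a*b' + b*d') (c*a' + d*c') (c*b' + d*d') z"
    by (simp only: num moebius_denom_cocycle[OF assms]) (simp add: moebius_def)
  finally show ?thesis .
qed

definition slash_invariant :: "nat \<Rightarrow> (complex \<Rightarrow> complex) \<Rightarrow> int \<Rightarrow> int \<Rightarrow> int \<Rightarrow> int \<Rightarrow> bool" where
  "slash_invariant k \<phi> a b c d \<longleftrightarrow>
     (\<forall>z\<in>upper_half. \<phi> (moebius a b c d z) = (of_int c * z + of_int d) ^ k * \<phi> z)"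

lemma slash_invariant_compose:
  assumes "a' * d' - b' * c' = 1"
    and "slash_invariant k \<phi> a b c d" "slash_invariant k \<phi> a' b' c' d'"
  shows "slash_invariant k \<phi> (a*a' + b*c') (a*b' + b*d') (c*a' + d*c') (c*b' + d*d')"
  unfolding slash_invariant_def
proof
  fix z assume z: "z \<in> upper_half"
  have "\<phi> (moebius (a*a' + b*c') (a*b' + b*d') (c*a' + d*c') (c*b' + d*d') z)
      = \<phi> (moebius a b c d (moebius a' b' c' d' z))" using moebius_compose[OF assms(1) z] by simp
  also have "\<dots> = ((of_int c * moebius a' b' c' d' z + of_int d) * (of_int c' * z + of_int d')) ^ k * \<phi> z"
    using assms(2,3) moebius_in_upper_half[OF assms(1) z] z
    by (simp add: slash_invariant_def power_mult_distrib)
  also have "\<dots> = (of_int (c*a' + d*c') * z + of_int (c*b' + d*d')) ^ k * \<phi> z"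
    using moebius_denom_cocycle[OF assms(1) z] by simp
  finally show "\<phi> (moebius (a*a' + b*c') (a*b' + b*d') (c*a' + d*c') (c*b' + d*d') z) =
      (of_int (c*a' + d*c') * z + of_int (c*b' + d*d')) ^ k * \<phi> z" .
qed

lemma cusp_form_periodic:
  assumes "cusp_form k \<phi>" "z \<in> upper_half"
  shows "\<phi> (z + of_int n) = \<phi> z"
proof -
  have step: "\<phi> (u + 1) = \<phi> u" if "u \<in> upper_half" for u
    using assms(1) that by (auto simp: cusp_form_def)
  have up: "\<phi> (z + of_nat m) = \<phi> z" for m
  proof (induction m)
    case (Suc m)
    have "z + of_nat m \<in> upper_half" using assms(2) by (simp add: mem_upper_half_iff)
    from step[OF this] show ?case using Suc by (simp add: add_ac)
  qed simp
  have down: "\<phi> (z - of_nat m) = \<phi> z" for m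
  proof (induction m)
    case (Suc m)
    have "z - of_nat m - 1 \<in> upper_half" using assms(2) by (simp add: mem_upper_half_iff)
    from step[OF this] show ?case using Suc by (simp add: algebra_simps)
  qed simp
  show ?thesis
    using up[of "nat n"] down[of "nat (- n)"] by (cases "n \<ge> 0") simp_all
qed

lemma slash_invariant_translation:
  assumes "cusp_form k \<phi>" shows "slash_invariant k \<phi> 1 n 0 1"
  using cusp_form_periodic[OF assms] unfolding slash_invariant_def moebius_def by simp

lemma slash_invariant_neg_translation:
  assumes "cusp_form k \<phi>" "even k" shows "slash_invariant k \<phi> (-1) n 0 (-1)"
  unfolding slash_invariant_def moebius_def
proof
  fix z assume z: "z \<in> upper_half"
  have "(- z + of_int n) / - 1 = z + of_int (-n)" by simp
  then show "\<phi> ((of_int (- 1) * z + of_int n) / (of_int 0 * z + of_int (- 1))) =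
          (of_int 0 * z + of_int (- 1)) ^ k * \<phi> z"
    using cusp_form_periodic[OF assms(1) z, of "-n"] assms(2) by simp
qed

lemma slash_invariant_inversion:
  assumes "cusp_form k \<phi>" "even k" shows "slash_invariant k \<phi> 0 1 (-1) 0"
  using assms unfolding slash_invariant_def moebius_def cusp_form_def
  by (auto simp: divide_inverse mult.commute)

text \<open>Euclid's algorithm on the lower row: \<open>\<gamma>\<close> is a translation times the inversion times a
  matrix whose lower left entry is \<open>a mod c\<close>.\<close>
lemma cusp_form_slash_invariant:
  assumes "cusp_form k \<phi>" "even k" "a * d - b * c = 1"
  shows "slash_invariant k \<phi> a b c d"
  using assms(3)
proof (induction "nat \<bar>c\<bar>" arbitrary: a b c d rule: less_induct)
  case less
  show ?case
  proof (cases "c = 0")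
    case True
    then have "(a = 1 \<and> d = 1) \<or> (a = -1 \<and> d = -1)"
      using less.prems zmult_eq_1_iff by auto
    then show ?thesis
      using slash_invariant_translation[OF assms(1)] slash_invariant_neg_translation[OF assms(1,2)] True
      by auto
  next
    case False
    define n where "n = - (a div c)"
    have "a + n * c = a mod c" unfolding n_def
      by (metis add.commute diff_conv_add_uminus minus_div_mult_eq_mod minus_mult_left)
    then have smaller: "nat \<bar>a + n * c\<bar> < nat \<bar>c\<bar>"
      using False by (metis abs_mod_less nat_less_eq_zless abs_ge_zero)
    have det: "(-c) * (b + n*d) - (-d) * (a + n*c) = 1" using less.prems by (simp add: algebra_simps)
    have "slash_invariant k \<phi> (-c) (-d) (a + n*c) (b + n*d)"
      using less.hyps[OF smaller det] .
    then have M: "slash_invariant k \<phi> (a + n*c) (b + n*d) c d"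
      using slash_invariant_compose[OF det slash_invariant_inversion[OF assms(1,2)]] by simp
    have "(a + n*c) * d - (b + n*d) * c = 1" using less.prems by (simp add: algebra_simps)
    from slash_invariant_compose[OF this slash_invariant_translation[OF assms(1), of "-n"] M]
    show ?thesis by (simp add: algebra_simps)
  qed
qed

section \<open>Exponential decay of cusp forms\<close>

lemma cusp_form_eq_if_exp_eq:
  assumes "cusp_form k \<phi>" "w \<in> upper_half"
    and "exp (2 * of_real pi * \<i> * z) = exp (2 * of_real pi * \<i> * w)"
  shows "\<phi> z = \<phi> w"
proof -
  obtain n :: int where "2 * of_real pi * \<i> * z = 2 * of_real pi * \<i> * w + (of_int (2 * n) * pi) * \<i>"
    using assms(3) exp_eq by blast
  then have "2 * of_real pi * \<i> * z = 2 * of_real pi * \<i> * (w + of_int n)"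
    by (simp add: algebra_simps)
  then have "z = w + of_int n" by simp
  then show ?thesis using cusp_form_periodic[OF assms(1,2)] by simp
qed

text \<open>A cusp form as a function of the local parameter \<open>q = exp(2\<pi>iz)\<close> at \<open>i\<infinity>\<close>.\<close>
definition q_fun :: "(complex \<Rightarrow> complex) \<Rightarrow> complex \<Rightarrow> complex" where
  "q_fun \<phi> \<zeta> = \<phi> (Ln \<zeta> / (2 * of_real pi * \<i>))"

lemma Im_Ln_div_2pi_i:
  assumes "\<zeta> \<noteq> 0"
  shows "Im (Ln \<zeta> / (2 * of_real pi * \<i>)) = - ln (cmod \<zeta>) / (2 * pi)"
proof -
  have "Ln \<zeta> / (2 * of_real pi * \<i>) = - \<i> * Ln \<zeta> / (2 * of_real pi)"
    by (simp add: field_simps)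
  also have "Im \<dots> = - Re (Ln \<zeta>) / (2 * pi)"
    by (simp add: Im_divide_of_real)
  finally show ?thesis using assms by simp
qed

lemma Ln_div_2pi_i_in_upper_half:
  assumes "\<zeta> \<in> ball 0 1 - {0}"
  shows "Ln \<zeta> / (2 * of_real pi * \<i>) \<in> upper_half"
proof -
  have "ln (cmod \<zeta>) < 0" using assms by simp
  then show ?thesis
    using assms Im_Ln_div_2pi_i[of \<zeta>] by (auto simp: mem_upper_half_iff divide_neg_pos)
qed

lemma q_fun_exp:
  assumes "cusp_form k \<phi>" "z \<in> upper_half"
  shows "q_fun \<phi> (exp (2 * of_real pi * \<i> * z)) = \<phi> z"
  unfolding q_fun_def
proof (rule cusp_form_eq_if_exp_eq[OF assms])
  let ?\<zeta> = "exp (2 * of_real pi * \<i> * z)"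
  have "2 * of_real pi * \<i> * (Ln ?\<zeta> / (2 * of_real pi * \<i>)) = Ln ?\<zeta>" by simp
  then show "exp (2 * of_real pi * \<i> * (Ln ?\<zeta> / (2 * of_real pi * \<i>))) = ?\<zeta>" by simp
qed

text \<open>Off the negative real axis \<open>Ln\<close> is holomorphic; on it, the branch \<open>Ln (-\<zeta>) + i\<pi>\<close> differs
  from \<open>Ln \<zeta>\<close> by a multiple of \<open>2\<pi>i\<close>, which the periodic \<open>\<phi>\<close> does not see.\<close>
lemma q_fun_holomorphic:
  assumes "cusp_form k \<phi>"
  shows "q_fun \<phi> holomorphic_on ball 0 1 - {0}"
proof -
  define c :: complex where "c = 2 * of_real pi * \<i>"
  have c0: "c \<noteq> 0" by (simp add: c_def)
  define B where "B = ball (0::complex) 1 - {0}"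
  define g2 where "g2 = (\<lambda>\<zeta>. \<phi> ((Ln (- \<zeta>) + \<i> * pi) / c))"
  have oB: "open B" unfolding B_def by auto
  have lnH: "Ln \<zeta> / c \<in> upper_half" if "\<zeta> \<in> B" for \<zeta>
    using Ln_div_2pi_i_in_upper_half that by (simp add: B_def c_def)
  have ln2H: "(Ln (- \<zeta>) + \<i> * pi) / c \<in> upper_half" if "\<zeta> \<in> B" for \<zeta>
  proof -
    have "(Ln (- \<zeta>) + \<i> * pi) / c = Ln (- \<zeta>) / c + 1/2"
      by (simp add: c_def field_simps)
    then show ?thesis using lnH[of "-\<zeta>"] that by (simp add: mem_upper_half_iff B_def)
  qed
  have g2: "q_fun \<phi> \<zeta> = g2 \<zeta>" if "\<zeta> \<in> B" for \<zeta>
  proof -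
    have "exp (c * ((Ln (- \<zeta>) + \<i> * pi) / c)) = exp (c * (Ln \<zeta> / c))"
      using c0 that by (simp add: exp_add B_def)
    then show ?thesis unfolding q_fun_def g2_def
      using cusp_form_eq_if_exp_eq[OF assms ln2H[OF that]] by (metis c_def)
  qed
  have \<phi>: "\<phi> field_differentiable at w" if "w \<in> upper_half" for w
    using assms that open_upper_half holomorphic_on_imp_differentiable_at
    by (auto simp: cusp_form_def)
  have "q_fun \<phi> field_differentiable at \<zeta>" if \<zeta>: "\<zeta> \<in> B" for \<zeta>
  proof (cases "\<zeta> \<in> \<real>\<^sub>\<le>\<^sub>0")
    case False
    have "(\<lambda>\<zeta>. Ln \<zeta> / c) field_differentiable at \<zeta>"
      using False c0 by (intro derivative_intros field_differentiable_at_Ln field_differentiable_divide) auto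
    then have "(\<phi> \<circ> (\<lambda>\<zeta>. Ln \<zeta> / c)) field_differentiable at \<zeta>"
      by (rule field_differentiable_compose) (use \<phi> lnH \<zeta> in auto)
    then show ?thesis unfolding q_fun_def c_def o_def .
  next
    case True
    then have nz: "- \<zeta> \<notin> \<real>\<^sub>\<le>\<^sub>0"
      using \<zeta> by (auto simp: B_def complex_nonpos_Reals_iff complex_eq_iff)
    have "(\<lambda>\<zeta>. Ln (- \<zeta>)) field_differentiable at \<zeta>"
      using field_differentiable_compose[of uminus \<zeta> Ln] nz
      by (simp add: o_def field_differentiable_at_Ln field_differentiable_minus field_differentiable_ident)
    then have "(\<lambda>\<zeta>. (Ln (- \<zeta>) + \<i> * pi) / c) field_differentiable at \<zeta>"
      using c0 by (intro field_differentiable_divide field_differentiable_add) auto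
    then have "(\<phi> \<circ> (\<lambda>\<zeta>. (Ln (- \<zeta>) + \<i> * pi) / c)) field_differentiable at \<zeta>"
      by (rule field_differentiable_compose) (use \<phi> ln2H \<zeta> in auto)
    then obtain f' where "(g2 has_field_derivative f') (at \<zeta>)"
      unfolding g2_def field_differentiable_def o_def by blast
    then have "(q_fun \<phi> has_field_derivative f') (at \<zeta>)"
      by (rule has_field_derivative_transform_within_open[OF _ oB \<zeta>]) (simp add: g2)
    then show ?thesis unfolding field_differentiable_def by blast
  qed
  then show ?thesis
    using oB by (simp add: B_def holomorphic_on_open field_differentiable_def)
qed

lemma q_fun_tendsto_0:
  assumes "cusp_form k \<phi>"
  shows "(q_fun \<phi> \<longlongrightarrow> 0) (at 0)"
  unfolding tendsto_iff
proof (intro allI impI)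
  fix e :: real assume e: "e > 0"
  have "eventually (\<lambda>z. dist (\<phi> z) 0 < e) (filtercomap Im at_top)"
    using assms e by (simp add: cusp_form_def tendsto_iff)
  then obtain Y where Y: "\<And>z. Im z \<ge> Y \<Longrightarrow> dist (\<phi> z) 0 < e"
    by (auto simp: eventually_filtercomap_at_top_linorder)
  show "eventually (\<lambda>\<zeta>. dist (q_fun \<phi> \<zeta>) 0 < e) (at 0)"
    unfolding eventually_at
  proof (intro exI[of _ "exp (- 2 * pi * Y)"] conjI ballI impI)
    fix \<zeta> :: complex assume h: "\<zeta> \<noteq> 0 \<and> dist \<zeta> 0 < exp (- 2 * pi * Y)"
    then have "ln (cmod \<zeta>) < ln (exp (- 2 * pi * Y))"
      by (subst ln_less_cancel_iff) auto
    then have "ln (cmod \<zeta>) < - 2 * pi * Y" by simp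
    then have "Y * (2 * pi) \<le> - ln (cmod \<zeta>)" by (simp add: algebra_simps)
    then have "Y \<le> - ln (cmod \<zeta>) / (2 * pi)" by (simp add: field_simps)
    then have "Im (Ln \<zeta> / (2 * of_real pi * \<i>)) \<ge> Y" using h by (simp add: Im_Ln_div_2pi_i)
    then show "dist (q_fun \<phi> \<zeta>) 0 < e" using Y by (simp add: q_fun_def)
  qed simp
qed

lemma holomorphic_vanishing_at_0_bound:
  assumes "f holomorphic_on ball 0 1" "f 0 = 0"
  obtains C \<delta> where "0 < \<delta>" "\<delta> \<le> 1" "\<And>\<zeta>. cmod \<zeta> < \<delta> \<Longrightarrow> cmod (f \<zeta>) \<le> C * cmod \<zeta>"
proof -
  obtain D where "(f has_field_derivative D) (at 0)"
    using holomorphic_on_imp_differentiable_at[OF assms(1) open_ball, of 0]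
    by (auto simp: field_differentiable_def)
  then have "((\<lambda>\<zeta>. f \<zeta> / \<zeta>) \<longlongrightarrow> D) (at 0)"
    using assms(2) by (simp add: DERIV_def)
  then have "eventually (\<lambda>\<zeta>. dist (f \<zeta> / \<zeta>) D < 1) (at 0)"
    by (simp add: tendsto_iff)
  then obtain \<delta> where \<delta>: "\<delta> > 0" "\<And>\<zeta>. \<zeta> \<noteq> 0 \<Longrightarrow> cmod \<zeta> < \<delta> \<Longrightarrow> dist (f \<zeta> / \<zeta>) D < 1"
    by (auto simp: eventually_at)
  have bound: "cmod (f \<zeta>) \<le> (cmod D + 1) * cmod \<zeta>" if "cmod \<zeta> < min \<delta> 1" for \<zeta>
  proof (cases "\<zeta> = 0")
    case False
    have "cmod (f \<zeta> / \<zeta>) - cmod D \<le> cmod (f \<zeta> / \<zeta> - D)" by (rule norm_triangle_ineq2)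
    then have "cmod (f \<zeta> / \<zeta>) \<le> cmod D + 1" using \<delta>(2)[OF False] that by (simp add: dist_norm)
    then show ?thesis using False by (simp add: norm_divide divide_le_eq)
  qed (simp add: assms(2))
  show ?thesis by (rule that[where C = "cmod D + 1" and \<delta> = "min \<delta> 1"]) (use \<delta>(1) bound in auto)
qed

lemma cusp_form_exp_decay:
  assumes "cusp_form k \<phi>"
  obtains C Y where "Y > 0" "\<And>z. Im z \<ge> Y \<Longrightarrow> cmod (\<phi> z) \<le> C * exp (- 2 * pi * Im z)"
proof -
  define g where "g = (q_fun \<phi>)(0 := 0)"
  have "g holomorphic_on ball 0 1"
  proof (rule no_isolated_singularity'[where K = "{0}"])
    show "g holomorphic_on ball 0 1 - {0}"
      using holomorphic_transform[OF q_fun_holomorphic[OF assms], of g] by (auto simp: g_def)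
    have "eventually (\<lambda>\<zeta>. q_fun \<phi> \<zeta> = g \<zeta>) (at 0)"
      by (auto simp: eventually_at_filter g_def)
    with q_fun_tendsto_0[OF assms] have g0: "(g \<longlongrightarrow> 0) (at 0)"
      by (rule Lim_transform_eventually)
    show "(g \<longlongrightarrow> g z) (at z within ball 0 1)" if "z \<in> {0}" for z
      using tendsto_within_subset[OF g0 subset_UNIV] that by (simp add: g_def)
  qed auto
  then obtain C \<delta> where \<delta>: "0 < \<delta>" "\<delta> \<le> 1" and C: "\<And>\<zeta>. cmod \<zeta> < \<delta> \<Longrightarrow> cmod (g \<zeta>) \<le> C * cmod \<zeta>"
    using holomorphic_vanishing_at_0_bound by (metis fun_upd_same g_def)
  define Y where "Y = (1 - ln \<delta>) / (2 * pi)"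
  have "ln \<delta> \<le> 0" using \<delta> by simp
  then have "1 - ln \<delta> > 0" by simp
  then have "Y > 0" by (simp add: Y_def)
  moreover have "cmod (\<phi> z) \<le> C * exp (- 2 * pi * Im z)" if z: "Im z \<ge> Y" for z
  proof -
    let ?\<zeta> = "exp (2 * of_real pi * \<i> * z)"
    have norm: "cmod ?\<zeta> = exp (- 2 * pi * Im z)" by simp
    have "2 * pi * Im z \<ge> 1 - ln \<delta>" using z by (simp add: Y_def pos_divide_le_eq mult.commute)
    then have "- 2 * pi * Im z < ln \<delta>" by simp
    then have "cmod ?\<zeta> < \<delta>" using \<delta>(1) norm by (metis exp_less_cancel_iff exp_ln)
    moreover have "z \<in> upper_half" using z \<open>Y > 0\<close> by (simp add: mem_upper_half_iff)
    then have "g ?\<zeta> = \<phi> z" using q_fun_exp[OF assms] by (simp add: g_def)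
    ultimately show ?thesis using C norm by metis
  qed
  ultimately show ?thesis using that by blast
qed

section \<open>Iterated primitives on the upper half-plane\<close>

definition primitive_from :: "(complex \<Rightarrow> complex) \<Rightarrow> complex \<Rightarrow> complex \<Rightarrow> complex" where
  "primitive_from f a = (SOME g. (\<forall>z\<in>upper_half. (g has_field_derivative f z) (at z)) \<and> g a = 0)"

lemma primitive_from:
  assumes "f holomorphic_on upper_half" "a \<in> upper_half"
  shows "\<And>z. z \<in> upper_half \<Longrightarrow> (primitive_from f a has_field_derivative f z) (at z)"
    and "primitive_from f a a = 0"
proof -
  obtain g where g: "\<And>x. x \<in> upper_half \<Longrightarrow> (g has_field_derivative f x) (at x within upper_half)"
    using holomorphic_convex_primitive'[OF convex_upper_half open_upper_half assms(1)] by blast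
  have "(\<forall>z\<in>upper_half. ((\<lambda>z. g z - g a) has_field_derivative f z) (at z)) \<and> g a - g a = 0"
  proof (intro conjI ballI)
    fix z assume z: "z \<in> upper_half"
    have "(g has_field_derivative f z) (at z)"
      using g[OF z] unfolding at_within_open[OF z open_upper_half] .
    from DERIV_diff[OF this DERIV_const[of "g a"]]
    show "((\<lambda>z. g z - g a) has_field_derivative f z) (at z)" by simp
  qed simp
  from someI[where P = "\<lambda>g. (\<forall>z\<in>upper_half. (g has_field_derivative f z) (at z)) \<and> g a = 0", OF this]
  show "\<And>z. z \<in> upper_half \<Longrightarrow> (primitive_from f a has_field_derivative f z) (at z)"
    and "primitive_from f a a = 0"
    unfolding primitive_from_def by blast+
qed

lemma eq_if_same_derivative:
  assumes "convex S"
    and "\<And>z. z \<in> S \<Longrightarrow> (h1 has_field_derivative f z) (at z)"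
    and "\<And>z. z \<in> S \<Longrightarrow> (h2 has_field_derivative f z) (at z)"
    and "a \<in> S" "z \<in> S" "h1 a = h2 a"
  shows "h1 z = h2 z"
proof -
  have "\<exists>c. \<forall>x\<in>S. h1 x - h2 x = c"
  proof (rule has_field_derivative_zero_constant[OF assms(1)])
    fix x assume x: "x \<in> S"
    from DERIV_diff[OF assms(2)[OF x] assms(3)[OF x]]
    show "((\<lambda>x. h1 x - h2 x) has_field_derivative 0) (at x within S)"
      by (simp add: has_field_derivative_at_within)
  qed
  then obtain c where "\<forall>x\<in>S. h1 x - h2 x = c" by blast
  then have "h1 z - h2 z = c" "h1 a - h2 a = c" using assms(4,5) by auto
  then show ?thesis using assms(6) by simp
qed

text \<open>The coefficient 1-forms \<open>\<omega> j\<close> of \<open>\<Sum>\<^sub>j A\<^sub>j \<omega>\<^sub>j(z) dz\<close>.\<close>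
definition holomorphic_forms :: "(nat \<Rightarrow> complex \<Rightarrow> complex) \<Rightarrow> bool" where
  "holomorphic_forms \<omega> \<longleftrightarrow> (\<forall>j. \<omega> j holomorphic_on upper_half)"

fun iter_prim :: "(nat \<Rightarrow> complex \<Rightarrow> complex) \<Rightarrow> complex \<Rightarrow> nat list \<Rightarrow> complex \<Rightarrow> complex" where
  "iter_prim \<omega> a [] = (\<lambda>z. 1)"
| "iter_prim \<omega> a (j # ws) = primitive_from (\<lambda>z. \<omega> j z * iter_prim \<omega> a ws z) a"

lemma iter_prim_holomorphic_and_derivative:
  assumes "holomorphic_forms \<omega>" "a \<in> upper_half"
  shows "iter_prim \<omega> a ws holomorphic_on upper_half \<and>
    (\<forall>j. \<forall>z\<in>upper_half. (iter_prim \<omega> a (j # ws) has_field_derivative \<omega> j z * iter_prim \<omega> a ws z) (at z)) \<and>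
    (\<forall>j. iter_prim \<omega> a (j # ws) a = 0)"
proof (induction ws)
  case Nil
  have "(\<lambda>z. \<omega> j z * iter_prim \<omega> a [] z) holomorphic_on upper_half" for j
    using assms(1) by (simp add: holomorphic_forms_def)
  from primitive_from[OF this assms(2)] show ?case by simp
next
  case (Cons k ws)
  then have hol: "iter_prim \<omega> a (k # ws) holomorphic_on upper_half"
    unfolding holomorphic_on_open[OF open_upper_half] by blast
  have "(\<lambda>z. \<omega> j z * iter_prim \<omega> a (k # ws) z) holomorphic_on upper_half" for j
    using assms(1) hol by (auto simp: holomorphic_forms_def simp del: iter_prim.simps intro!: holomorphic_intros)
  from primitive_from[OF this assms(2)] hol show ?case by (simp only: iter_prim.simps(2)) blast
qed

lemma iter_prim_has_derivative:
  assumes "holomorphic_forms \<omega>" "a \<in> upper_half" "z \<in> upper_half"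
  shows "(iter_prim \<omega> a (j # ws) has_field_derivative \<omega> j z * iter_prim \<omega> a ws z) (at z)"
  using iter_prim_holomorphic_and_derivative[OF assms(1,2)] assms(3) by blast

lemma iter_prim_at_base:
  assumes "holomorphic_forms \<omega>" "a \<in> upper_half"
  shows "iter_prim \<omega> a ws a = nc_one ws"
  using iter_prim_holomorphic_and_derivative[OF assms] by (cases ws) (auto simp: nc_one_def)

lemma iter_prim_mult_has_derivative:
  assumes "holomorphic_forms \<omega>" "a \<in> upper_half" "z \<in> upper_half"
  shows "((\<lambda>z. nc_mult (\<lambda>v. iter_prim \<omega> a v z) Q (j # ws)) has_field_derivative
           \<omega> j z * nc_mult (\<lambda>v. iter_prim \<omega> a v z) Q ws) (at z)"
proof -
  have expand: "nc_mult (\<lambda>v. iter_prim \<omega> a v z) Q (j # ws) =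
      Q (j # ws) + (\<Sum>i\<le>length ws. iter_prim \<omega> a (j # take i ws) z * Q (drop i ws))" for z
    unfolding nc_mult_Cons by (simp add: nc_mult_def nc_shift_def)
  have "((\<lambda>z. Q (j # ws) + (\<Sum>i\<le>length ws. iter_prim \<omega> a (j # take i ws) z * Q (drop i ws)))
      has_field_derivative 0 + (\<Sum>i\<le>length ws. (\<omega> j z * iter_prim \<omega> a (take i ws) z) * Q (drop i ws))) (at z)"
    by (intro derivative_intros DERIV_sum DERIV_cmult_right iter_prim_has_derivative[OF assms])
  moreover have "(\<Sum>i\<le>length ws. (\<omega> j z * iter_prim \<omega> a (take i ws) z) * Q (drop i ws)) =
      \<omega> j z * nc_mult (\<lambda>v. iter_prim \<omega> a v z) Q ws"
    by (simp add: nc_mult_def sum_distrib_left mult.assoc)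
  ultimately show ?thesis unfolding expand by simp
qed

lemma iter_prim_unique:
  assumes "holomorphic_forms \<omega>" "a \<in> upper_half"
    and F0: "\<And>z. z \<in> upper_half \<Longrightarrow> F [] z = 1"
    and F1: "\<And>j ws z. z \<in> upper_half \<Longrightarrow> (F (j # ws) has_field_derivative \<omega> j z * F ws z) (at z)"
    and z: "z \<in> upper_half"
  shows "F ws z = nc_mult (\<lambda>v. iter_prim \<omega> a v z) (\<lambda>v. F v a) ws"
  using z
proof (induction ws arbitrary: z)
  case Nil
  then show ?case using F0 assms(2) by simp
next
  case (Cons j ws)
  let ?R = "\<lambda>z. nc_mult (\<lambda>v. iter_prim \<omega> a v z) (\<lambda>v. F v a) (j # ws)"
  show ?case
  proof (rule eq_if_same_derivative[OF convex_upper_half F1 _ assms(2) Cons.prems])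
    show "(?R has_field_derivative \<omega> j z * F ws z) (at z)" if "z \<in> upper_half" for z
      using iter_prim_mult_has_derivative[OF assms(1,2) that] Cons.IH[OF that] by simp
    show "F (j # ws) a = ?R a" by (simp add: iter_prim_at_base[OF assms(1,2)])
  qed
qed

lemma iter_prim_chen:
  assumes "holomorphic_forms \<omega>" "a \<in> upper_half" "b \<in> upper_half" "z \<in> upper_half"
  shows "iter_prim \<omega> b ws z = nc_mult (\<lambda>v. iter_prim \<omega> a v z) (\<lambda>v. iter_prim \<omega> b v a) ws"
  by (rule iter_prim_unique[OF assms(1,2) _ _ assms(4)]) (simp, rule iter_prim_has_derivative[OF assms(1,3)])

lemma moebius_has_derivative:
  assumes "a * d - b * c = 1" "z \<in> upper_half"
  shows "(moebius a b c d has_field_derivative 1 / (of_int c * z + of_int d)^2) (at z)"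
proof -
  have n: "of_int c * z + of_int d \<noteq> 0" by (rule moebius_denom_nonzero[OF assms])
  have "(moebius a b c d has_field_derivative
      (of_int a * (of_int c * z + of_int d) - (of_int a * z + of_int b) * of_int c) / (of_int c * z + of_int d)^2) (at z)"
    unfolding moebius_def using n by (auto intro!: derivative_eq_intros simp: power2_eq_square)
  moreover have "of_int a * (of_int c * z + of_int d) - (of_int a * z + of_int b) * of_int c =
      (of_int (a * d - b * c) :: complex)"
    by (simp add: algebra_simps)
  ultimately show ?thesis using assms(1) by simp
qed

lemma iter_prim_moebius:
  assumes "holomorphic_forms \<omega>" "holomorphic_forms \<omega>'" "a * d - b * c = 1"
    and "x \<in> upper_half" "z \<in> upper_half"
    and pullback: "\<And>j z. z \<in> upper_half \<Longrightarrow> \<omega>' j z = \<omega> j (moebius a b c d z) / (of_int c * z + of_int d)^2"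
  shows "iter_prim \<omega> (moebius a b c d x) ws (moebius a b c d z) = iter_prim \<omega>' x ws z"
proof -
  define F where "F = (\<lambda>ws z. iter_prim \<omega> (moebius a b c d x) ws (moebius a b c d z))"
  have mH: "moebius a b c d z \<in> upper_half" if "z \<in> upper_half" for z
    using moebius_in_upper_half[OF assms(3) that] .
  have "F ws z = nc_mult (\<lambda>v. iter_prim \<omega>' x v z) (\<lambda>v. F v x) ws"
  proof (rule iter_prim_unique[OF assms(2,4) _ _ assms(5)])
    show "F [] z = 1" for z by (simp add: F_def)
    fix j ws z assume z: "z \<in> upper_half"
    have "((\<lambda>z. iter_prim \<omega> (moebius a b c d x) (j # ws) (moebius a b c d z)) has_field_derivative
        (\<omega> j (moebius a b c d z) * iter_prim \<omega> (moebius a b c d x) ws (moebius a b c d z)) *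
        (1 / (of_int c * z + of_int d)^2)) (at z)"
      by (rule DERIV_chain2[OF iter_prim_has_derivative[OF assms(1) mH[OF assms(4)] mH[OF z]]
            moebius_has_derivative[OF assms(3) z]])
    then show "(F (j # ws) has_field_derivative \<omega>' j z * F ws z) (at z)"
      unfolding F_def pullback[OF z] by (simp add: field_simps)
  qed
  also have "(\<lambda>v. F v x) = nc_one"
    using iter_prim_at_base[OF assms(1) mH[OF assms(4)]] by (simp add: F_def)
  finally show ?thesis by (simp add: F_def)
qed

section \<open>The forms \<open>\<Omega>(p,q)\<close>\<close>

lemma cusp_form_basis_cusp_form: "cusp_form_basis k r \<phi> \<Longrightarrow> j < r \<Longrightarrow> cusp_form k (\<phi> j)"
  by (simp add: cusp_form_basis_def)

lemma Omega_holomorphic_forms: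
  assumes "cusp_form_basis k r \<phi>"
  shows "holomorphic_forms (Omega \<phi> r w p q)"
  unfolding holomorphic_forms_def Omega_def
proof
  fix j
  show "(\<lambda>z. if j < r then \<phi> j z * (of_int p * z - of_int q) ^ w else 0) holomorphic_on upper_half"
  proof (cases "j < r")
    case True
    then have "\<phi> j holomorphic_on upper_half"
      using cusp_form_basis_cusp_form[OF assms True] by (simp add: cusp_form_def)
    then show ?thesis using True by (auto intro!: holomorphic_intros)
  qed simp
qed

lemma Omega_neg:
  assumes "even w"
  shows "Omega \<phi> r w (-p) (-q) = Omega \<phi> r w p q" "Omega \<phi> r w p (-q) = Omega \<phi> r w (-p) q"
proof -
  have "(of_int q - of_int p * z) ^ w = (of_int p * z - of_int q) ^ w" for z :: complex
    using power_minus_even[OF assms, of "of_int p * z - of_int q"] by simp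
  moreover have "(of_int p * z + of_int q) ^ w = (- (of_int p * z) - of_int q) ^ w" for z :: complex
    using power_minus_even[OF assms, of "of_int p * z + of_int q"] by simp
  ultimately show "Omega \<phi> r w (-p) (-q) = Omega \<phi> r w p q" "Omega \<phi> r w p (-q) = Omega \<phi> r w (-p) q"
    unfolding Omega_def by (auto intro!: ext)
qed

text \<open>The pullback of \<open>\<Omega>(p,q)\<close> under \<open>\<gamma> = (a b; c d)\<close> is \<open>\<Omega>((p,q)\<gamma>)\<close>, with the row vector
  \<open>(p,q)\<close> standing for the linear form \<open>pz - q\<close>.\<close>
lemma Omega_moebius:
  assumes "cusp_form_basis (w + 2) r \<phi>" "even w" "a * d - b * c = 1" "z \<in> upper_half"
  shows "Omega \<phi> r w p q j (moebius a b c d z) / (of_int c * z + of_int d)^2 =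
         Omega \<phi> r w (p*a - q*c) (q*d - p*b) j z"
proof (cases "j < r")
  case True
  define X where "X = of_int c * z + of_int d"
  define Y where "Y = of_int p * moebius a b c d z - of_int q"
  have X: "X \<noteq> 0" unfolding X_def by (rule moebius_denom_nonzero[OF assms(3,4)])
  have "\<phi> j (moebius a b c d z) = X ^ (w+2) * \<phi> j z"
    using cusp_form_slash_invariant[OF cusp_form_basis_cusp_form[OF assms(1) True] _ assms(3)] assms(2,4)
    by (simp add: slash_invariant_def X_def)
  moreover have "Y * X = of_int (p*a - q*c) * z - of_int (q*d - p*b)"
    using X unfolding X_def Y_def moebius_def by (simp add: divide_simps; simp add: algebra_simps)
  moreover have "X ^ (w+2) * \<phi> j z * Y ^ w / X^2 = \<phi> j z * (Y * X) ^ w"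
    using X by (simp add: power_add power_mult_distrib power2_eq_square)
  ultimately show ?thesis using True by (simp add: Omega_def X_def Y_def)
qed (simp add: Omega_def)

definition exp_decaying :: "(nat \<Rightarrow> complex \<Rightarrow> complex) \<Rightarrow> bool" where
  "exp_decaying \<omega> \<longleftrightarrow> (\<forall>M\<ge>0. \<exists>K Y. Y > 0 \<and> K \<ge> 0 \<and>
     (\<forall>j z. \<bar>Re z\<bar> \<le> M \<longrightarrow> Im z \<ge> Y \<longrightarrow> cmod (\<omega> j z) \<le> K * exp (- Im z)))"

text \<open>The factor \<open>(pz - q)\<^sup>w\<close> grows at most like \<open>exp(w y/(w+1))\<close> with \<open>y = Im z\<close>,
  because \<open>y \<le> (w+1) exp(y/(w+1))\<close>.\<close>
lemma norm_linear_power_le: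
  assumes "\<bar>Re z\<bar> \<le> M" "Im z \<ge> 1"
  shows "cmod (of_int p * z - of_int q) ^ w \<le>
    (\<bar>of_int p\<bar> * M + \<bar>of_int q\<bar> + \<bar>of_int p\<bar> * (real w + 1)) ^ w * exp (real w * Im z / (real w + 1))"
proof -
  define y where "y = Im z"
  define e where "e = exp (y / (real w + 1))"
  define P where "P = \<bar>of_int p\<bar> * M + \<bar>of_int q\<bar> + \<bar>of_int p\<bar> * (real w + 1)"
  have M: "M \<ge> 0" using assms(1) by linarith
  have e1: "e \<ge> 1" unfolding e_def using assms(2) by (simp add: y_def)
  have "cmod (of_int p * z - of_int q) \<le> \<bar>of_int p\<bar> * cmod z + \<bar>of_int q\<bar>"
    using norm_triangle_ineq4[of "of_int p * z" "of_int q"] by (simp add: norm_mult norm_of_int)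
  also have "\<dots> \<le> \<bar>of_int p\<bar> * (M + y) + \<bar>of_int q\<bar>"
    using cmod_le[of z] assms by (intro add_right_mono mult_left_mono) (simp_all add: y_def)
  also have "\<dots> \<le> P * e"
  proof -
    have "\<bar>of_int p\<bar> * M + \<bar>of_int q\<bar> \<le> (\<bar>of_int p\<bar> * M + \<bar>of_int q\<bar>) * e"
      using mult_left_mono[OF e1, of "\<bar>of_int p\<bar> * M + \<bar>of_int q\<bar>"] M by simp
    moreover have "y \<le> (real w + 1) * e"
    proof -
      have "y / (real w + 1) \<le> e"
        unfolding e_def using exp_ge_add_one_self[of "y / (real w + 1)"] by linarith
      then show ?thesis by (simp add: field_simps)
    qed
    then have "\<bar>of_int p\<bar> * y \<le> \<bar>of_int p\<bar> * ((real w + 1) * e)"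
      by (rule mult_left_mono) simp
    ultimately show ?thesis unfolding P_def by (simp add: algebra_simps)
  qed
  finally have "cmod (of_int p * z - of_int q) ^ w \<le> (P * e) ^ w" by (rule power_mono) simp
  also have "(P * e) ^ w = P ^ w * exp (real w * y / (real w + 1))"
    unfolding e_def by (simp add: power_mult_distrib exp_of_nat_mult[symmetric])
  finally show ?thesis by (simp add: P_def y_def)
qed

lemma cusp_form_basis_exp_decay:
  assumes "cusp_form_basis k r \<phi>"
  obtains Y C where "Y \<ge> 1" "C \<ge> 0"
    "\<And>j z. j < r \<Longrightarrow> Im z \<ge> Y \<Longrightarrow> cmod (\<phi> j z) \<le> C * exp (- 2 * pi * Im z)"
proof -
  have "\<forall>j. \<exists>C Y. j < r \<longrightarrow> Y > 0 \<and> (\<forall>z. Im z \<ge> Y \<longrightarrow> cmod (\<phi> j z) \<le> C * exp (- 2 * pi * Im z))"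
    using cusp_form_exp_decay[OF cusp_form_basis_cusp_form[OF assms]] by metis
  then obtain C Y where Y: "\<And>j. j < r \<Longrightarrow> Y j > 0"
    and C: "\<And>j z. j < r \<Longrightarrow> Im z \<ge> Y j \<Longrightarrow> cmod (\<phi> j z) \<le> C j * exp (- 2 * pi * Im z)"
    by metis
  define Cm where "Cm = (\<Sum>j<r. \<bar>C j\<bar>)"
  define Ym where "Ym = 1 + (\<Sum>j<r. Y j)"
  have "0 \<le> (\<Sum>j<r. Y j)" by (rule sum_nonneg) (use Y in \<open>auto intro: less_imp_le\<close>)
  then have "Ym \<ge> 1" by (simp add: Ym_def)
  moreover have "Cm \<ge> 0" by (simp add: Cm_def sum_nonneg)
  moreover have "cmod (\<phi> j z) \<le> Cm * exp (- 2 * pi * Im z)" if j: "j < r" and z: "Im z \<ge> Ym" for j z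
  proof -
    have "Y j \<le> (\<Sum>j<r. Y j)"
      by (rule member_le_sum) (use j Y in \<open>auto intro: less_imp_le\<close>)
    then have "cmod (\<phi> j z) \<le> C j * exp (- 2 * pi * Im z)" using C[OF j] z by (simp add: Ym_def)
    also have "\<dots> \<le> Cm * exp (- 2 * pi * Im z)"
    proof (rule mult_right_mono)
      have "C j \<le> \<bar>C j\<bar>" by simp
      also have "\<dots> \<le> Cm" unfolding Cm_def by (rule member_le_sum) (use j in auto)
      finally show "C j \<le> Cm" .
    qed simp
    finally show ?thesis .
  qed
  ultimately show ?thesis by (rule that)
qed

lemma Omega_exp_decaying:
  assumes "cusp_form_basis k r \<phi>"
  shows "exp_decaying (Omega \<phi> r w p q)"
  unfolding exp_decaying_def
proof (intro allI impI)
  fix M :: real assume M: "M \<ge> 0"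
  obtain Y C where Y: "Y \<ge> 1" and C: "C \<ge> 0"
    and \<phi>: "\<And>j z. j < r \<Longrightarrow> Im z \<ge> Y \<Longrightarrow> cmod (\<phi> j z) \<le> C * exp (- 2 * pi * Im z)"
    using cusp_form_basis_exp_decay[OF assms] by metis
  define P where "P = \<bar>of_int p\<bar> * M + \<bar>of_int q\<bar> + \<bar>of_int p\<bar> * (real w + 1)"
  have P: "P \<ge> 0" using M by (simp add: P_def)
  have bound: "cmod (Omega \<phi> r w p q j z) \<le> C * P ^ w * exp (- Im z)"
    if Re: "\<bar>Re z\<bar> \<le> M" and Im: "Im z \<ge> Y" for j z
  proof (cases "j < r")
    case False
    then show ?thesis using C P by (simp add: Omega_def)
  next
    case True
    define y where "y = Im z"
    have y1: "y \<ge> 1" using Im Y by (simp add: y_def)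
    have ex: "exp (- 2 * pi * y) * exp (real w * y / (real w + 1)) \<le> exp (- y)"
    proof -
      have "real w * y / (real w + 1) \<le> y" using y1 by (simp add: field_simps)
      moreover have "- 2 * pi * y \<le> - 2 * y" using y1 pi_gt3 by simp
      ultimately show ?thesis by (simp add: exp_add[symmetric])
    qed
    have "cmod (Omega \<phi> r w p q j z) = cmod (\<phi> j z) * cmod (of_int p * z - of_int q) ^ w"
      using True by (simp add: Omega_def norm_mult norm_power)
    also have "\<dots> \<le> (C * exp (- 2 * pi * y)) * (P ^ w * exp (real w * y / (real w + 1)))"
      using \<phi>[OF True Im] norm_linear_power_le[OF Re, of p q w] y1 C
      by (intro mult_mono) (simp_all add: P_def y_def)
    also have "\<dots> = C * P ^ w * (exp (- 2 * pi * y) * exp (real w * y / (real w + 1)))" by simp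
    also have "\<dots> \<le> C * P ^ w * exp (- y)"
      by (rule mult_left_mono[OF ex]) (use C P in simp)
    finally show ?thesis by (simp add: y_def)
  qed
  show "\<exists>K Y. Y > 0 \<and> K \<ge> 0 \<and> (\<forall>j z. \<bar>Re z\<bar> \<le> M \<longrightarrow> Im z \<ge> Y \<longrightarrow>
      cmod (Omega \<phi> r w p q j z) \<le> K * exp (- Im z))"
  proof (intro exI conjI allI impI)
    show "Y > 0" "C * P ^ w \<ge> 0" using Y C P by simp_all
  qed (rule bound)
qed

section \<open>Growth of iterated primitives and their limit at the cusp\<close>

lemma norm_diff_le_of_derivative_bound:
  fixes h :: "real \<Rightarrow> complex"
  assumes hd: "\<And>s. s \<in> {min a b..max a b} \<Longrightarrow> (h has_vector_derivative h' s) (at s)"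
    and gd: "\<And>s. s \<in> {min a b..max a b} \<Longrightarrow> (g has_real_derivative g' s) (at s)"
    and le: "\<And>s. s \<in> {min a b..max a b} \<Longrightarrow> norm (h' s) \<le> g' s"
  shows "norm (h b - h a) \<le> \<bar>g b - g a\<bar>"
proof -
  have ordered: "norm (h v - h u) \<le> g v - g u" if uv: "u \<le> v" "{u..v} = {min a b..max a b}" for u v
  proof -
    have "(h' has_integral (h v - h u)) {u..v}"
      using uv hd by (intro fundamental_theorem_of_calculus) (auto intro: has_vector_derivative_at_within)
    moreover have "(g' has_integral (g v - g u)) {u..v}"
      using uv gd by (intro fundamental_theorem_of_calculus)
        (auto simp: has_real_derivative_iff_has_vector_derivative[symmetric] intro: DERIV_subset)
    moreover have "norm (integral {u..v} h') \<le> integral {u..v} g'"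
      using calculation le uv(2) by (intro integral_norm_bound_integral) (auto simp: has_integral_integrable)
    ultimately show ?thesis by (simp add: integral_unique)
  qed
  show ?thesis
  proof (cases "a \<le> b")
    case True
    then show ?thesis using ordered[of a b] by simp
  next
    case False
    then show ?thesis using ordered[of b a] by (simp add: norm_minus_commute)
  qed
qed

lemma has_vector_derivative_vertical:
  assumes "(F has_field_derivative D) (at (Complex x s))"
  shows "((\<lambda>s. F (Complex x s)) has_vector_derivative D * \<i>) (at s)"
proof -
  have e: "\<And>s. Complex x s = of_real x + \<i> * of_real s" by (simp add: complex_eq_iff)
  have d: "((\<lambda>u. of_real x + \<i> * u) has_field_derivative \<i>) (at (of_real s))"
    by (auto intro!: derivative_eq_intros)
  have "((\<lambda>u. F (of_real x + \<i> * u)) has_field_derivative D * \<i>) (at (of_real s))"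
    by (rule DERIV_chain2[OF _ d]) (use assms in \<open>simp add: e\<close>)
  from has_vector_derivative_real_field[OF this] show ?thesis unfolding e .
qed

lemma has_vector_derivative_horizontal:
  assumes "(F has_field_derivative D) (at (Complex t y))"
  shows "((\<lambda>t. F (Complex t y)) has_vector_derivative D) (at t)"
proof -
  have e: "\<And>t. Complex t y = of_real t + \<i> * of_real y" by (simp add: complex_eq_iff)
  have d: "((\<lambda>u. u + \<i> * of_real y) has_field_derivative 1) (at (of_real t))"
    by (auto intro!: derivative_eq_intros)
  have "((\<lambda>u. F (u + \<i> * of_real y)) has_field_derivative D * 1) (at (of_real t))"
    by (rule DERIV_chain2[OF _ d]) (use assms in \<open>simp add: e\<close>)
  from has_vector_derivative_real_field[OF this] show ?thesis unfolding e by simp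
qed

lemma iter_prim_vertical_bound:
  assumes \<omega>: "holomorphic_forms \<omega>" and K: "K \<ge> 0" and Y: "Y > 0"
    and dec: "\<And>j \<zeta>. \<bar>Re \<zeta>\<bar> \<le> M \<Longrightarrow> Im \<zeta> \<ge> Y \<Longrightarrow> cmod (\<omega> j \<zeta>) \<le> K * exp (- Im \<zeta>)"
    and x: "\<bar>x\<bar> \<le> M" and y1: "y1 \<ge> Y" and y: "y \<ge> Y"
  shows "cmod (iter_prim \<omega> (Complex x y1) ws (Complex x y)) \<le> (K * exp (- Y)) ^ length ws"
  using y
proof (induction ws arbitrary: y)
  case Nil
  then show ?case by simp
next
  case (Cons j ws)
  define z1 where "z1 = Complex x y1"
  have z1: "z1 \<in> upper_half" unfolding z1_def using y1 Y by (intro Complex_in_upper_half) simp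
  define C where "C = K * (K * exp (- Y)) ^ length ws"
  have C0: "C \<ge> 0" using K by (simp add: C_def)
  define h where "h = (\<lambda>s. iter_prim \<omega> z1 (j # ws) (Complex x s))"
  define h' where "h' = (\<lambda>s. \<omega> j (Complex x s) * iter_prim \<omega> z1 ws (Complex x s) * \<i>)"
  have on_ray: "s \<ge> Y" if "s \<in> {min y1 y..max y1 y}" for s
    using that Cons.prems y1 by auto
  have "norm (h y - h y1) \<le> \<bar>- C * exp (- y) - - C * exp (- y1)\<bar>"
  proof (rule norm_diff_le_of_derivative_bound[where h' = h' and g' = "\<lambda>s. C * exp (- s)"])
    fix s assume "s \<in> {min y1 y..max y1 y}"
    then have s: "s \<ge> Y" by (rule on_ray)
    show "(h has_vector_derivative h' s) (at s)"
      unfolding h_def h'_def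
      by (rule has_vector_derivative_vertical[OF iter_prim_has_derivative[OF \<omega> z1 Complex_in_upper_half]])
        (use s Y in simp)
    show "((\<lambda>s. - C * exp (- s)) has_real_derivative C * exp (- s)) (at s)"
      by (auto intro!: derivative_eq_intros)
    have "norm (h' s) = cmod (\<omega> j (Complex x s)) * cmod (iter_prim \<omega> z1 ws (Complex x s))"
      by (simp add: h'_def norm_mult)
    also have "\<dots> \<le> (K * exp (- s)) * (K * exp (- Y)) ^ length ws"
      using dec[of "Complex x s"] x s Cons.IH[of s] K by (intro mult_mono) (auto simp: z1_def)
    finally show "norm (h' s) \<le> C * exp (- s)" by (simp add: C_def mult_ac)
  qed
  also have "\<dots> = C * \<bar>exp (- y1) - exp (- y)\<bar>" using C0 by (simp add: abs_mult flip: right_diff_distrib)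
  also have "\<dots> \<le> C * exp (- Y)"
  proof (intro mult_left_mono C0)
    have "exp (- y) \<le> exp (- Y)" "exp (- y1) \<le> exp (- Y)" using Cons.prems y1 by auto
    moreover have "0 < exp (- y)" "0 < exp (- y1)" by auto
    ultimately show "\<bar>exp (- y1) - exp (- y)\<bar> \<le> exp (- Y)" unfolding abs_le_iff by linarith
  qed
  finally have "norm (h y) \<le> (K * exp (- Y)) ^ length (j # ws)"
    using iter_prim_at_base[OF \<omega> z1, of "j # ws"] by (simp add: h_def z1_def C_def nc_one_def mult_ac)
  then show ?case by (simp add: h_def z1_def)
qed

lemma iter_prim_horizontal_bound:
  assumes \<omega>: "holomorphic_forms \<omega>" and K: "K \<ge> 0" and Y: "Y > 0"
    and dec: "\<And>j \<zeta>. \<bar>Re \<zeta>\<bar> \<le> M \<Longrightarrow> Im \<zeta> \<ge> Y \<Longrightarrow> cmod (\<omega> j \<zeta>) \<le> K * exp (- Im \<zeta>)"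
    and x1: "\<bar>x1\<bar> \<le> M" and y: "y \<ge> Y" and t: "\<bar>t\<bar> \<le> M"
  shows "cmod (iter_prim \<omega> (Complex x1 y) ws (Complex t y)) \<le> (K * exp (- Y) * \<bar>t - x1\<bar>) ^ length ws"
  using t
proof (induction ws arbitrary: t)
  case Nil
  then show ?case by simp
next
  case (Cons j ws)
  define z1 where "z1 = Complex x1 y"
  have z1: "z1 \<in> upper_half" unfolding z1_def using y Y by (intro Complex_in_upper_half) simp
  define \<mu> where "\<mu> = K * exp (- Y)"
  have \<mu>0: "\<mu> \<ge> 0" using K by (simp add: \<mu>_def)
  define B where "B = \<mu> * (\<mu> * \<bar>t - x1\<bar>) ^ length ws"
  define h where "h = (\<lambda>s. iter_prim \<omega> z1 (j # ws) (Complex s y))"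
  define h' where "h' = (\<lambda>s. \<omega> j (Complex s y) * iter_prim \<omega> z1 ws (Complex s y))"
  have "norm (h t - h x1) \<le> \<bar>B * t - B * x1\<bar>"
  proof (rule norm_diff_le_of_derivative_bound[where h' = h' and g' = "\<lambda>s. B"])
    fix s assume "s \<in> {min x1 t..max x1 t}"
    then have s: "\<bar>s\<bar> \<le> M" "\<bar>s - x1\<bar> \<le> \<bar>t - x1\<bar>"
      using Cons.prems x1 by (auto simp: abs_if split: if_splits)
    show "(h has_vector_derivative h' s) (at s)"
      unfolding h_def h'_def
      by (rule has_vector_derivative_horizontal[OF iter_prim_has_derivative[OF \<omega> z1 Complex_in_upper_half]])
        (use y Y in simp)
    show "((*) B has_real_derivative B) (at s)"
      by (auto intro!: derivative_eq_intros)
    have "cmod (\<omega> j (Complex s y)) \<le> K * exp (- y)" using dec[of "Complex s y"] s y by simp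
    also have "\<dots> \<le> \<mu>" unfolding \<mu>_def using y K by (intro mult_left_mono) auto
    finally have \<omega>_le: "cmod (\<omega> j (Complex s y)) \<le> \<mu>" .
    have "cmod (iter_prim \<omega> z1 ws (Complex s y)) \<le> (\<mu> * \<bar>s - x1\<bar>) ^ length ws"
      using Cons.IH[OF s(1)] by (simp add: z1_def \<mu>_def)
    also have "\<dots> \<le> (\<mu> * \<bar>t - x1\<bar>) ^ length ws"
      using s(2) \<mu>0 by (intro power_mono mult_left_mono) auto
    finally show "norm (h' s) \<le> B"
      using \<omega>_le
      unfolding h'_def B_def norm_mult using \<mu>0 by (intro mult_mono) auto
  qed
  also have "\<bar>B * t - B * x1\<bar> = B * \<bar>t - x1\<bar>"
    using \<mu>0 by (simp add: B_def abs_mult flip: right_diff_distrib)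
  also have "\<dots> = (\<mu> * \<bar>t - x1\<bar>) ^ length (j # ws)"
    by (simp add: B_def mult_ac)
  finally show ?case
    using iter_prim_at_base[OF \<omega> z1, of "j # ws"] by (simp add: h_def z1_def \<mu>_def nc_one_def)
qed

text \<open>Any two points high enough in a vertical strip are joined by a vertical, a horizontal
  and a vertical segment, along which the bounds above combine by Chen's relation.\<close>
lemma iter_prim_bound:
  assumes \<omega>: "holomorphic_forms \<omega>" and K: "K \<ge> 0" and Y0: "Y0 > 0" and M: "M \<ge> 0"
    and dec: "\<And>j \<zeta>. \<bar>Re \<zeta>\<bar> \<le> M \<Longrightarrow> Im \<zeta> \<ge> Y0 \<Longrightarrow> cmod (\<omega> j \<zeta>) \<le> K * exp (- Im \<zeta>)"
    and x: "\<bar>x1\<bar> \<le> M" "\<bar>x2\<bar> \<le> M" and Y: "Y \<ge> Y0" and y: "y1 \<ge> Y" "y2 \<ge> Y"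
  shows "cmod (iter_prim \<omega> (Complex x1 y1) ws (Complex x2 y2)) \<le> ((2 + 2 * M) * K * exp (- Y)) ^ length ws"
proof -
  have decY: "\<And>j \<zeta>. \<bar>Re \<zeta>\<bar> \<le> M \<Longrightarrow> Im \<zeta> \<ge> Y \<Longrightarrow> cmod (\<omega> j \<zeta>) \<le> K * exp (- Im \<zeta>)"
    using dec Y by force
  have Y_pos: "Y > 0" using Y Y0 by simp
  define H where "H = max y1 y2"
  have H: "H \<ge> Y" using y by (simp add: H_def)
  define \<mu> where "\<mu> = K * exp (- Y)"
  have \<mu>0: "\<mu> \<ge> 0" using K by (simp add: \<mu>_def)
  have in_H: "Complex x1 y1 \<in> upper_half" "Complex x2 y2 \<in> upper_half" "Complex x1 H \<in> upper_half"
    "Complex x2 H \<in> upper_half" using y Y_pos H by (auto intro!: Complex_in_upper_half)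
  have up: "cmod (iter_prim \<omega> (Complex x1 y1) v (Complex x1 H)) \<le> \<mu> ^ length v" for v
    using iter_prim_vertical_bound[OF \<omega> K Y_pos decY x(1) y(1) H] by (simp add: \<mu>_def)
  have down: "cmod (iter_prim \<omega> (Complex x2 H) v (Complex x2 y2)) \<le> \<mu> ^ length v" for v
    using iter_prim_vertical_bound[OF \<omega> K Y_pos decY x(2) H y(2)] by (simp add: \<mu>_def)
  have across: "cmod (iter_prim \<omega> (Complex x1 H) v (Complex x2 H)) \<le> (2 * M * \<mu>) ^ length v" for v
  proof -
    have "cmod (iter_prim \<omega> (Complex x1 H) v (Complex x2 H)) \<le> (\<mu> * \<bar>x2 - x1\<bar>) ^ length v"
      using iter_prim_horizontal_bound[OF \<omega> K Y_pos decY x(1) H x(2)] by (simp add: \<mu>_def)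
    also have "\<dots> \<le> (2 * M * \<mu>) ^ length v"
      by (rule power_mono) (use x \<mu>0 in \<open>auto simp: mult.commute intro!: mult_left_mono\<close>)
    finally show ?thesis .
  qed
  have across_down: "cmod (iter_prim \<omega> (Complex x1 H) v (Complex x2 y2)) \<le> (\<mu> + 2 * M * \<mu>) ^ length v" for v
    unfolding iter_prim_chen[OF \<omega> in_H(4,3,2)]
    by (rule norm_nc_mult_le_power[OF down across \<mu>0]) (use M \<mu>0 in simp)
  have "cmod (iter_prim \<omega> (Complex x1 y1) ws (Complex x2 y2)) \<le> ((\<mu> + 2 * M * \<mu>) + \<mu>) ^ length ws"
    unfolding iter_prim_chen[OF \<omega> in_H(3,1,2)]
    by (rule norm_nc_mult_le_power[OF across_down up]) (use M \<mu>0 in simp_all)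
  also have "(\<mu> + 2 * M * \<mu>) + \<mu> = (2 + 2 * M) * K * exp (- Y)"
    by (simp add: \<mu>_def algebra_simps)
  finally show ?thesis .
qed

lemma exists_exp_neg_le:
  fixes c \<delta> Y0 :: real
  assumes "c \<ge> 0" "\<delta> > 0"
  obtains Y where "Y \<ge> Y0" "c * exp (- Y) \<le> \<delta>"
proof -
  define Y where "Y = max Y0 (- ln (\<delta> / (c + 1)))"
  have "exp (- Y) \<le> exp (ln (\<delta> / (c + 1)))" by (simp add: Y_def)
  also have "\<dots> = \<delta> / (c + 1)" using assms by simp
  finally have "c * exp (- Y) \<le> c * (\<delta> / (c + 1))" using assms(1) by (rule mult_left_mono)
  also have "\<dots> \<le> \<delta>" using assms by (simp add: field_simps)
  finally show ?thesis using that[of Y] by (simp add: Y_def)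
qed

lemma iter_prim_strip_bound:
  assumes \<omega>: "holomorphic_forms \<omega>" and K: "K \<ge> 0" and Y0: "Y0 > 0" and M: "M \<ge> 0"
    and dec: "\<And>j \<zeta>. \<bar>Re \<zeta>\<bar> \<le> M \<Longrightarrow> Im \<zeta> \<ge> Y0 \<Longrightarrow> cmod (\<omega> j \<zeta>) \<le> K * exp (- Im \<zeta>)"
    and b: "b \<in> upper_half"
  obtains B where "\<And>v x y. \<bar>x\<bar> \<le> M \<Longrightarrow> y \<ge> Y0 \<Longrightarrow> cmod (iter_prim \<omega> b v (Complex x y)) \<le> B v"
proof -
  define z0 where "z0 = Complex 0 Y0"
  have z0: "z0 \<in> upper_half" using Y0 by (simp add: z0_def mem_upper_half_iff)
  define \<mu> where "\<mu> = (2 + 2 * M) * K * exp (- Y0)"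
  have "cmod (iter_prim \<omega> b v (Complex x y)) \<le>
      (\<Sum>k\<le>length v. \<mu> ^ k * cmod (iter_prim \<omega> b (drop k v) z0))"
    if xy: "\<bar>x\<bar> \<le> M" "y \<ge> Y0" for v x y
  proof -
    have z: "Complex x y \<in> upper_half" using xy Y0 by (simp add: mem_upper_half_iff)
    have "cmod (iter_prim \<omega> b v (Complex x y)) \<le>
        (\<Sum>k\<le>length v. cmod (iter_prim \<omega> z0 (take k v) (Complex x y) * iter_prim \<omega> b (drop k v) z0))"
      unfolding iter_prim_chen[OF \<omega> z0 b z] nc_mult_def by (rule norm_sum)
    also have "\<dots> \<le> (\<Sum>k\<le>length v. \<mu> ^ k * cmod (iter_prim \<omega> b (drop k v) z0))"
    proof (rule sum_mono)
      fix k assume k: "k \<in> {..length v}"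
      have "cmod (iter_prim \<omega> z0 (take k v) (Complex x y)) \<le> \<mu> ^ length (take k v)"
        unfolding z0_def \<mu>_def by (rule iter_prim_bound[OF \<omega> K Y0 M dec]) (use xy M in auto)
      then show "cmod (iter_prim \<omega> z0 (take k v) (Complex x y) * iter_prim \<omega> b (drop k v) z0)
          \<le> \<mu> ^ k * cmod (iter_prim \<omega> b (drop k v) z0)"
        using k unfolding norm_mult by (intro mult_right_mono) simp_all
    qed
    finally show ?thesis .
  qed
  then show ?thesis by (rule that)
qed

text \<open>By Chen's relation, \<open>G\<^sub>b(z\<^sub>2) - G\<^sub>b(z\<^sub>1)\<close> is a sum of products \<open>G\<^sub>z\<^sub>1(u)(z\<^sub>2) G\<^sub>b(v)(z\<^sub>1)\<close> with
  \<open>u\<close> non-empty; the first factor is exponentially small and the second bounded.\<close>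
lemma iter_prim_uniform_Cauchy:
  assumes \<omega>: "holomorphic_forms \<omega>" and dc: "exp_decaying \<omega>" and b: "b \<in> upper_half"
    and M: "M \<ge> 0" and \<epsilon>: "\<epsilon> > 0"
  obtains Y where "\<And>x1 y1 x2 y2. \<bar>x1\<bar> \<le> M \<Longrightarrow> \<bar>x2\<bar> \<le> M \<Longrightarrow> y1 \<ge> Y \<Longrightarrow> y2 \<ge> Y \<Longrightarrow>
     cmod (iter_prim \<omega> b ws (Complex x2 y2) - iter_prim \<omega> b ws (Complex x1 y1)) < \<epsilon>"
proof -
  obtain K Y0 where Y0: "Y0 > 0" and K: "K \<ge> 0"
    and dec: "\<And>j \<zeta>. \<bar>Re \<zeta>\<bar> \<le> M \<Longrightarrow> Im \<zeta> \<ge> Y0 \<Longrightarrow> cmod (\<omega> j \<zeta>) \<le> K * exp (- Im \<zeta>)"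
    using dc M unfolding exp_decaying_def by blast
  obtain B where B: "\<And>v x y. \<bar>x\<bar> \<le> M \<Longrightarrow> y \<ge> Y0 \<Longrightarrow> cmod (iter_prim \<omega> b v (Complex x y)) \<le> B v"
    using iter_prim_strip_bound[OF \<omega> K Y0 M dec b] by blast
  have B0: "B v \<ge> 0" for v
    using order_trans[OF norm_ge_zero B[of 0 Y0 v]] M by simp
  define c where "c = (2 + 2 * M) * K"
  define S where "S = (\<Sum>i\<le>length ws. B (drop i ws))"
  have c0: "c \<ge> 0" using M K by (simp add: c_def)
  have S0: "S \<ge> 0" unfolding S_def by (simp add: B0 sum_nonneg)
  obtain Y where Y: "Y \<ge> Y0" and small: "c * exp (- Y) \<le> min 1 (\<epsilon> / (2 * (S + 1)))"
    using exists_exp_neg_le[OF c0, of "min 1 (\<epsilon> / (2 * (S + 1)))" Y0] \<epsilon> S0 by auto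
  have \<mu>0: "c * exp (- Y) \<ge> 0" using c0 by simp
  have "cmod (iter_prim \<omega> b ws (Complex x2 y2) - iter_prim \<omega> b ws (Complex x1 y1)) < \<epsilon>"
    if h: "\<bar>x1\<bar> \<le> M" "\<bar>x2\<bar> \<le> M" "y1 \<ge> Y" "y2 \<ge> Y" for x1 y1 x2 y2
  proof -
    define z1 where "z1 = Complex x1 y1"
    define z2 where "z2 = Complex x2 y2"
    have z: "z1 \<in> upper_half" "z2 \<in> upper_half" using h Y Y0 by (auto simp: z1_def z2_def mem_upper_half_iff)
    define f where "f = (\<lambda>i. iter_prim \<omega> z1 (take i ws) z2 * iter_prim \<omega> b (drop i ws) z1)"
    have "iter_prim \<omega> b ws z2 = (\<Sum>i\<le>length ws. f i)"
      using iter_prim_chen[OF \<omega> z(1) b z(2)] by (simp add: nc_mult_def f_def)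
    also have "\<dots> = f 0 + (\<Sum>i\<in>{..length ws} - {0}. f i)"
      by (rule sum.remove) auto
    also have "f 0 = iter_prim \<omega> b ws z1" by (simp add: f_def)
    finally have "cmod (iter_prim \<omega> b ws z2 - iter_prim \<omega> b ws z1) = cmod (\<Sum>i\<in>{..length ws} - {0}. f i)"
      by simp
    also have "\<dots> \<le> (\<Sum>i\<in>{..length ws} - {0}. c * exp (- Y) * B (drop i ws))"
    proof (rule order_trans[OF norm_sum sum_mono])
      fix i assume i: "i \<in> {..length ws} - {0}"
      have "cmod (iter_prim \<omega> z1 (take i ws) z2) \<le> (c * exp (- Y)) ^ length (take i ws)"
        unfolding z1_def z2_def c_def by (rule iter_prim_bound[OF \<omega> K Y0 M dec]) (use h Y in auto)
      also have "length (take i ws) = i" using i by simp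
      also have "(c * exp (- Y)) ^ i \<le> c * exp (- Y)"
        using power_decreasing[of 1 i "c * exp (- Y)"] i \<mu>0 small by auto
      finally show "cmod (f i) \<le> c * exp (- Y) * B (drop i ws)"
        unfolding f_def norm_mult z1_def using B[of x1 y1] h Y \<mu>0 by (intro mult_mono) auto
    qed
    also have "\<dots> \<le> c * exp (- Y) * S"
      unfolding S_def sum_distrib_left by (rule sum_mono2) (use \<mu>0 B0 in auto)
    also have "\<dots> \<le> \<epsilon> / (2 * (S + 1)) * S"
      using small S0 by (intro mult_right_mono) auto
    also have "\<dots> < \<epsilon>" using S0 \<epsilon> by (simp add: field_simps add_nonneg_pos mult_nonneg_nonneg)
    finally show ?thesis by (simp add: z1_def z2_def)
  qed
  then show ?thesis by (rule that)
qed

text \<open>The limit at \<open>i\<infinity>\<close> of \<open>iter_prim \<omega> b\<close>, taken along the imaginary axis; by uniformity it is the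
  limit along every vertical line.\<close>
definition prim_at_infinity :: "(nat \<Rightarrow> complex \<Rightarrow> complex) \<Rightarrow> complex \<Rightarrow> ncps" where
  "prim_at_infinity \<omega> b = (\<lambda>ws. lim (\<lambda>n. iter_prim \<omega> b ws (Complex 0 (real n))))"

lemma prim_at_infinity_Nil: "prim_at_infinity \<omega> b [] = 1"
  by (simp add: prim_at_infinity_def limI[OF tendsto_const])

lemma prim_at_infinity_tendsto:
  assumes \<omega>: "holomorphic_forms \<omega>" and dc: "exp_decaying \<omega>" and b: "b \<in> upper_half"
  shows "((\<lambda>T. iter_prim \<omega> b ws (Complex x T)) \<longlongrightarrow> prim_at_infinity \<omega> b ws) at_top"
proof -
  define s where "s = (\<lambda>n. iter_prim \<omega> b ws (Complex 0 (real n)))"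
  have "Cauchy s"
    unfolding Cauchy_iff
  proof (intro allI impI)
    fix e :: real assume e: "e > 0"
    obtain Y where Y: "\<And>x1 y1 x2 y2. \<bar>x1\<bar> \<le> 0 \<Longrightarrow> \<bar>x2\<bar> \<le> 0 \<Longrightarrow> y1 \<ge> Y \<Longrightarrow> y2 \<ge> Y \<Longrightarrow>
       cmod (iter_prim \<omega> b ws (Complex x2 y2) - iter_prim \<omega> b ws (Complex x1 y1)) < e"
      using iter_prim_uniform_Cauchy[OF \<omega> dc b order_refl e] by blast
    show "\<exists>N. \<forall>m\<ge>N. \<forall>n\<ge>N. norm (s m - s n) < e"
    proof (intro exI allI impI)
      fix m n assume "nat \<lceil>Y\<rceil> \<le> m" "nat \<lceil>Y\<rceil> \<le> n"
      then have "real m \<ge> Y" "real n \<ge> Y" by linarith+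
      then show "norm (s m - s n) < e" unfolding s_def using Y by simp
    qed
  qed
  then have L: "s \<longlonglongrightarrow> prim_at_infinity \<omega> b ws"
    unfolding prim_at_infinity_def s_def[symmetric] by (simp add: Cauchy_convergent_iff convergent_LIMSEQ_iff)
  show ?thesis
    unfolding tendsto_iff
  proof (intro allI impI)
    fix e :: real assume e: "e > 0"
    obtain Y where Y: "\<And>x1 y1 x2 y2. \<bar>x1\<bar> \<le> \<bar>x\<bar> \<Longrightarrow> \<bar>x2\<bar> \<le> \<bar>x\<bar> \<Longrightarrow> y1 \<ge> Y \<Longrightarrow> y2 \<ge> Y \<Longrightarrow>
       cmod (iter_prim \<omega> b ws (Complex x2 y2) - iter_prim \<omega> b ws (Complex x1 y1)) < e / 2"
      using iter_prim_uniform_Cauchy[OF \<omega> dc b abs_ge_zero half_gt_zero[OF e]] by blast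
    obtain N where N: "\<And>n. n \<ge> N \<Longrightarrow> dist (s n) (prim_at_infinity \<omega> b ws) < e / 2"
      using L e unfolding tendsto_iff eventually_sequentially by (meson half_gt_zero)
    define n where "n = max N (nat \<lceil>Y\<rceil>)"
    have nY: "real n \<ge> Y" unfolding n_def by linarith
    have sn: "dist (s n) (prim_at_infinity \<omega> b ws) < e / 2" using N by (simp add: n_def)
    show "eventually (\<lambda>T. dist (iter_prim \<omega> b ws (Complex x T)) (prim_at_infinity \<omega> b ws) < e) at_top"
      unfolding eventually_at_top_linorder
    proof (intro exI allI impI)
      fix T assume T: "T \<ge> Y"
      have "dist (iter_prim \<omega> b ws (Complex x T)) (s n) < e / 2"
        using Y[of 0 x "real n" T] nY T by (simp add: s_def dist_norm)
      then show "dist (iter_prim \<omega> b ws (Complex x T)) (prim_at_infinity \<omega> b ws) < e"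
        using sn dist_triangle[of "iter_prim \<omega> b ws (Complex x T)" "prim_at_infinity \<omega> b ws" "s n"]
        by linarith
    qed
  qed
qed

section \<open>Iterated integrals along vertical rays\<close>

text \<open>If the solution \<open>G\<^sub>b Q\<close> of the differential system tends to \<open>1\<close> at the cusp \<open>x\<close>, it is the
  iterated integral from \<open>x\<close>: both sides satisfy the same recursion.\<close>
lemma vert_iter_eq_nc_mult:
  assumes \<omega>: "holomorphic_forms \<omega>" and b: "b \<in> upper_half" and Q0: "Q [] = 1"
    and lim: "\<And>ws. ((\<lambda>e. nc_mult (\<lambda>v. iter_prim \<omega> b v (Complex x e)) Q ws) \<longlongrightarrow> nc_one ws) (at_right 0)"
    and t: "t > 0"
  shows "vert_iter \<omega> x ws t = nc_mult (\<lambda>v. iter_prim \<omega> b v (Complex x t)) Q ws"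
  using t
proof (induction ws arbitrary: t)
  case Nil
  then show ?case using Q0 by simp
next
  case (Cons j ws)
  define F where "F = (\<lambda>ws z. nc_mult (\<lambda>v. iter_prim \<omega> b v z) Q ws)"
  define h where "h = (\<lambda>s. if s = 0 then 0 else F (j # ws) (Complex x s))"
  have der: "(h has_vector_derivative (\<omega> j (Complex x s) * vert_iter \<omega> x ws s * \<i>)) (at s)"
    if s: "s > 0" for s
  proof -
    have "((\<lambda>s. F (j # ws) (Complex x s)) has_vector_derivative (\<omega> j (Complex x s) * F ws (Complex x s)) * \<i>) (at s)"
      unfolding F_def
      by (rule has_vector_derivative_vertical[OF iter_prim_mult_has_derivative[OF \<omega> b Complex_in_upper_half[OF s]]])
    then have "((\<lambda>s. F (j # ws) (Complex x s)) has_vector_derivative (\<omega> j (Complex x s) * vert_iter \<omega> x ws s * \<i>)) (at s)"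
      using Cons.IH[OF s] by (simp add: F_def)
    then show ?thesis
      by (rule has_vector_derivative_transform_within_open[where S = "{0<..}"]) (use s in \<open>auto simp: h_def\<close>)
  qed
  have "continuous (at_right 0) h"
  proof -
    have "((\<lambda>e. F (j # ws) (Complex x e)) \<longlongrightarrow> 0) (at_right 0)"
      using lim[of "j # ws"] by (simp add: F_def nc_one_def)
    moreover have "eventually (\<lambda>e. F (j # ws) (Complex x e) = h e) (at_right 0)"
      using eventually_at_right_less[of "0::real"] by eventually_elim (simp add: h_def)
    ultimately show ?thesis
      unfolding continuous_within by (simp add: Lim_transform_eventually h_def)
  qed
  then have cont: "continuous_on {0..t} h"
    unfolding continuous_on_eq_continuous_within
  proof (intro ballI)
    fix s assume s: "s \<in> {0..t}"
    show "continuous (at s within {0..t}) h"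
    proof (cases "s = 0")
      case True
      then show ?thesis using \<open>continuous (at_right 0) h\<close> Cons.prems by (simp add: at_within_Icc_at_right)
    next
      case False
      then have "s > 0" using s by simp
      from has_vector_derivative_continuous[OF der[OF this]]
      show ?thesis by (rule continuous_within_subset) simp
    qed
  qed
  have "((\<lambda>s. \<omega> j (Complex x s) * vert_iter \<omega> x ws s * \<i>) has_integral (h t - h 0)) {0..t}"
    by (rule fundamental_theorem_of_calculus_interior[OF _ cont]) (use Cons.prems der in auto)
  then have "vert_iter \<omega> x (j # ws) t = h t - h 0"
    unfolding vert_iter.simps by (rule integral_unique)
  then show ?case using Cons.prems by (simp add: h_def F_def)
qed

lemma J_to_infty_eq:
  assumes \<omega>: "holomorphic_forms \<omega>" and dc: "exp_decaying \<omega>" and b: "b \<in> upper_half"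
    and P: "\<And>ws. ((\<lambda>e. iter_prim \<omega> b ws (Complex x e)) \<longlongrightarrow> P ws) (at_right 0)"
  shows "J_to_infty \<omega> x = nc_mult (prim_at_infinity \<omega> b) (nc_inverse P)"
proof
  fix ws
  have "((\<lambda>e::real. 1::complex) \<longlongrightarrow> P []) (at_right 0)" using P[of "[]"] by simp
  then have P0: "P [] = 1" using tendsto_unique[OF _ _ tendsto_const] by (metis trivial_limit_at_right_real)
  define Q where "Q = nc_inverse P"
  have Q0: "Q [] = 1" using nc_inverse_Nil[of P, OF P0] by (simp add: Q_def)
  have "((\<lambda>e. nc_mult (\<lambda>v. iter_prim \<omega> b v (Complex x e)) Q ws) \<longlongrightarrow> nc_mult P Q ws) (at_right 0)" for ws
    by (rule tendsto_nc_mult[OF P tendsto_const])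
  then have lim: "((\<lambda>e. nc_mult (\<lambda>v. iter_prim \<omega> b v (Complex x e)) Q ws) \<longlongrightarrow> nc_one ws) (at_right 0)" for ws
    using nc_inverse(1)[of P, OF P0] by (simp add: Q_def)
  have "((\<lambda>t. nc_mult (\<lambda>v. iter_prim \<omega> b v (Complex x t)) Q ws) \<longlongrightarrow> nc_mult (prim_at_infinity \<omega> b) Q ws) at_top"
    by (rule tendsto_nc_mult[OF prim_at_infinity_tendsto[OF \<omega> dc b] tendsto_const])
  then have "((\<lambda>t. vert_iter \<omega> x ws t) \<longlongrightarrow> nc_mult (prim_at_infinity \<omega> b) Q ws) at_top"
    by (rule Lim_transform_eventually)
      (auto simp: vert_iter_eq_nc_mult[OF \<omega> b Q0 lim] eventually_at_top_linorder intro!: exI[of _ 1])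
  then show "J_to_infty \<omega> x ws = nc_mult (prim_at_infinity \<omega> b) (nc_inverse P) ws"
    unfolding J_to_infty_def Q_def by (simp add: tendsto_Lim)
qed

lemma prim_at_infinity_chen:
  assumes \<omega>: "holomorphic_forms \<omega>" and dc: "exp_decaying \<omega>" and "a \<in> upper_half" "a' \<in> upper_half"
  shows "prim_at_infinity \<omega> a' = nc_mult (prim_at_infinity \<omega> a) (\<lambda>v. iter_prim \<omega> a' v a)"
proof
  fix ws
  have "((\<lambda>T. nc_mult (\<lambda>v. iter_prim \<omega> a v (Complex 0 T)) (\<lambda>v. iter_prim \<omega> a' v a) ws)
      \<longlongrightarrow> nc_mult (prim_at_infinity \<omega> a) (\<lambda>v. iter_prim \<omega> a' v a) ws) at_top"
    by (rule tendsto_nc_mult[OF prim_at_infinity_tendsto[OF \<omega> dc assms(3)] tendsto_const])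
  moreover have "eventually (\<lambda>T. nc_mult (\<lambda>v. iter_prim \<omega> a v (Complex 0 T)) (\<lambda>v. iter_prim \<omega> a' v a) ws =
      iter_prim \<omega> a' ws (Complex 0 T)) at_top"
    unfolding eventually_at_top_linorder
    by (intro exI[of _ 1] allI impI iter_prim_chen[OF \<omega> assms(3,4), symmetric]) (simp add: mem_upper_half_iff)
  ultimately have "((\<lambda>T. iter_prim \<omega> a' ws (Complex 0 T)) \<longlongrightarrow>
      nc_mult (prim_at_infinity \<omega> a) (\<lambda>v. iter_prim \<omega> a' v a) ws) at_top"
    by (rule Lim_transform_eventually)
  from tendsto_unique[OF trivial_limit_at_top_linorder prim_at_infinity_tendsto[OF \<omega> dc assms(4)] this]
  show "prim_at_infinity \<omega> a' ws = nc_mult (prim_at_infinity \<omega> a) (\<lambda>v. iter_prim \<omega> a' v a) ws" .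
qed

text \<open>\<open>\<gamma> = (q b; p d)\<close> maps the vertical ray above \<open>-d/p\<close> onto the one above \<open>q/p\<close>, reversing
  its direction: height \<open>1/(p\<^sup>2 e)\<close> goes to height \<open>e\<close>.\<close>
lemma moebius_vertical_ray:
  assumes "q * d - b * p = 1" "p \<noteq> 0" "e > 0"
  shows "moebius q b p d (Complex (- of_int d / of_int p) (1 / (of_int p ^ 2 * e))) =
    Complex (of_int q / of_int p) e"
proof -
  define P :: complex where "P = of_int p"
  define E :: complex where "E = of_real e"
  define Q :: complex where "Q = of_int q"
  define B :: complex where "B = of_int b"
  define D :: complex where "D = of_int d"
  have P: "P \<noteq> 0" using assms(2) by (simp add: P_def)
  have E: "E \<noteq> 0" using assms(3) by (simp add: E_def)
  define v where "v = - D / P + \<i> / (P^2 * E)"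
  have v: "Complex (- of_int d / of_int p) (1 / (of_int p ^ 2 * e)) = v"
    by (simp add: complex_eq_iff v_def P_def D_def E_def Re_divide Im_divide power2_eq_square)
  have w: "Complex (of_int q / of_int p) e = Q / P + \<i> * E"
    by (simp add: complex_eq_iff P_def Q_def E_def)
  have det: "Q * D - B * P = 1"
    using arg_cong[OF assms(1), of "of_int :: int \<Rightarrow> complex"] by (simp add: P_def Q_def B_def D_def)
  have den: "P * v + D = \<i> / (P * E)"
    using P E unfolding v_def by (simp add: field_simps power2_eq_square)
  have "Q * v + B = - (Q * D - B * P) / P + \<i> * Q / (P^2 * E)"
    using P E unfolding v_def by (simp add: field_simps power2_eq_square)
  also have "\<dots> = - 1 / P + \<i> * Q / (P^2 * E)" by (simp add: det)
  also have "\<dots> = (Q / P + \<i> * E) * (\<i> / (P * E))"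
    using P E by (simp add: field_simps power2_eq_square)
  finally have "Q * v + B = (Q / P + \<i> * E) * (P * v + D)" by (simp add: den)
  moreover have "P * v + D \<noteq> 0" using den P E by simp
  ultimately show ?thesis
    unfolding v w moebius_def P_def[symmetric] Q_def[symmetric] B_def[symmetric] D_def[symmetric]
    by (simp add: divide_eq_eq)
qed

lemma filterlim_inverse_scaled_at_right_0:
  assumes "k > (0::real)"
  shows "filterlim (\<lambda>e. 1 / (k * e)) at_top (at_right 0)"
proof -
  have "filterlim (\<lambda>e. inverse k * inverse e) at_top (at_right (0::real))"
    using assms by (intro filterlim_tendsto_pos_mult_at_top[OF tendsto_const _ filterlim_inverse_at_top_right])
      simp
  then show ?thesis by (simp add: field_simps)
qed

lemma vert_iter_outside_alphabet:
  assumes "\<not> set ws \<subseteq> {..<r}"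
  shows "vert_iter (Omega \<phi> r w p q) x ws t = 0"
  using assms
proof (induction ws arbitrary: t)
  case (Cons j ws)
  then show ?case by (cases "j < r") (auto simp: Omega_def)
qed simp

lemma J_to_infty_in_nc_group: "J_to_infty (Omega \<phi> r w p q) x \<in> nc_group r"
proof -
  have "vert_iter (Omega \<phi> r w p q) x [] = (\<lambda>t. 1)" by (rule ext) simp
  then have "J_to_infty (Omega \<phi> r w p q) x [] = 1"
    unfolding J_to_infty_def by (simp add: tendsto_Lim[OF trivial_limit_at_top_linorder tendsto_const])
  moreover have "J_to_infty (Omega \<phi> r w p q) x ws = 0" if "\<not> set ws \<subseteq> {..<r}" for ws
  proof -
    have "vert_iter (Omega \<phi> r w p q) x ws = (\<lambda>t. 0)"
      by (rule ext) (rule vert_iter_outside_alphabet[OF that])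
    then show ?thesis
      unfolding J_to_infty_def by (simp add: tendsto_Lim[OF trivial_limit_at_top_linorder tendsto_const])
  qed
  ultimately show ?thesis by (simp add: nc_group_def)
qed

section \<open>The reciprocity function and the Dedekind symbol\<close>

lemma coprime_unimodular_row:
  fixes p q :: int
  assumes "coprime p q"
  obtains b d where "q * d - b * p = 1"
proof -
  obtain u v where "u * q + v * p = gcd q p" using bezout_int by blast
  moreover have "gcd q p = 1" using assms by (simp add: coprime_iff_gcd_eq_1 gcd.commute)
  ultimately have "q * u - (- v) * p = 1" by (simp add: algebra_simps)
  then show ?thesis by (rule that)
qed

context
  fixes \<phi> :: "nat \<Rightarrow> complex \<Rightarrow> complex" and r w :: nat
  assumes basis: "cusp_form_basis (w + 2) r \<phi>" and ev: "even w"
begin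

abbreviation \<Lambda> :: "int \<Rightarrow> int \<Rightarrow> complex \<Rightarrow> ncps" where
  "\<Lambda> p q a \<equiv> prim_at_infinity (Omega \<phi> r w p q) a"

lemma Omega_forms: "holomorphic_forms (Omega \<phi> r w p q)" "exp_decaying (Omega \<phi> r w p q)"
  by (rule Omega_holomorphic_forms[OF basis], rule Omega_exp_decaying[OF basis])

lemma iter_prim_Omega_moebius:
  assumes "a * d - b * c = 1" "x \<in> upper_half" "z \<in> upper_half"
  shows "iter_prim (Omega \<phi> r w p q) (moebius a b c d x) ws (moebius a b c d z) =
    iter_prim (Omega \<phi> r w (p*a - q*c) (q*d - p*b)) x ws z"
  by (rule iter_prim_moebius[OF Omega_forms(1) Omega_forms(1) assms])
    (use Omega_moebius[OF basis ev assms(1)] in simp)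

lemma prim_at_infinity_translate:
  assumes "a \<in> upper_half"
  shows "\<Lambda> p (q - p * n) a = \<Lambda> p q (a + of_int n)"
proof
  fix ws
  have a': "a + of_int n \<in> upper_half" using assms by (simp add: mem_upper_half_iff)
  have "iter_prim (Omega \<phi> r w p q) (a + of_int n) ws (Complex (of_int n) T) =
      iter_prim (Omega \<phi> r w p (q - p * n)) a ws (Complex 0 T)" if "T > 0" for T
  proof -
    have "iter_prim (Omega \<phi> r w p q) (moebius 1 n 0 1 a) ws (moebius 1 n 0 1 (Complex 0 T)) =
        iter_prim (Omega \<phi> r w (p*1 - q*0) (q*1 - p*n)) a ws (Complex 0 T)"
      by (rule iter_prim_Omega_moebius) (use assms that in \<open>simp_all add: mem_upper_half_iff\<close>)
    moreover have "moebius 1 n 0 1 a = a + of_int n" "moebius 1 n 0 1 (Complex 0 T) = Complex (of_int n) T"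
      by (simp_all add: moebius_def complex_eq_iff)
    ultimately show ?thesis by simp
  qed
  then have "eventually (\<lambda>T. iter_prim (Omega \<phi> r w p q) (a + of_int n) ws (Complex (of_int n) T) =
      iter_prim (Omega \<phi> r w p (q - p * n)) a ws (Complex 0 T)) at_top"
    unfolding eventually_at_top_linorder by (intro exI[of _ 1]) simp
  with prim_at_infinity_tendsto[OF Omega_forms a']
  have "((\<lambda>T. iter_prim (Omega \<phi> r w p (q - p * n)) a ws (Complex 0 T)) \<longlongrightarrow> \<Lambda> p q (a + of_int n) ws) at_top"
    by (rule Lim_transform_eventually)
  from tendsto_unique[OF trivial_limit_at_top_linorder prim_at_infinity_tendsto[OF Omega_forms assms] this]
  show "\<Lambda> p (q - p * n) a ws = \<Lambda> p q (a + of_int n) ws" .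
qed

text \<open>\<open>\<gamma> = (q\<^sub>0 b\<^sub>0; p\<^sub>0 d\<^sub>0)\<close> maps \<open>-d\<^sub>0/p\<^sub>0\<close> to \<open>i\<infinity>\<close> and \<open>i\<infinity>\<close> to \<open>q\<^sub>0/p\<^sub>0\<close>; the base point \<open>c\<close> is arbitrary.\<close>
lemma J_to_infty_cusp:
  assumes det: "q0 * d0 - b0 * p0 = 1" and p0: "p0 \<noteq> 0" and c: "c \<in> upper_half"
  shows "J_to_infty (Omega \<phi> r w p q) (of_int q0 / of_int p0) =
     nc_mult (\<Lambda> p q (moebius q0 b0 p0 d0 c)) (nc_inverse (\<Lambda> (p*q0 - q*p0) (q*d0 - p*b0) c))"
proof (rule J_to_infty_eq[OF Omega_forms moebius_in_upper_half[OF det c]])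
  fix ws
  define k :: real where "k = of_int p0 ^ 2"
  define \<Omega>' where "\<Omega>' = Omega \<phi> r w (p*q0 - q*p0) (q*d0 - p*b0)"
  let ?ray = "\<lambda>e. Complex (- of_int d0 / of_int p0) (1 / (k * e))"
  have k: "k > 0" using p0 by (simp add: k_def)
  have "((\<lambda>e. iter_prim \<Omega>' c ws (?ray e)) \<longlongrightarrow> prim_at_infinity \<Omega>' c ws) (at_right 0)"
    unfolding \<Omega>'_def
    by (rule filterlim_compose[OF prim_at_infinity_tendsto[OF Omega_forms c]
          filterlim_inverse_scaled_at_right_0[OF k]])
  moreover have "eventually (\<lambda>e. iter_prim \<Omega>' c ws (?ray e) =
      iter_prim (Omega \<phi> r w p q) (moebius q0 b0 p0 d0 c) ws (Complex (of_int q0 / of_int p0) e)) (at_right 0)"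
    using eventually_at_right_less[of "0::real"]
  proof eventually_elim
    case (elim e)
    have "?ray e \<in> upper_half" using k elim by (simp add: mem_upper_half_iff)
    from iter_prim_Omega_moebius[OF det c this] show ?case
      using moebius_vertical_ray[OF det p0 elim] by (simp add: k_def \<Omega>'_def)
  qed
  ultimately show "((\<lambda>e. iter_prim (Omega \<phi> r w p q) (moebius q0 b0 p0 d0 c) ws (Complex (of_int q0 / of_int p0) e))
       \<longlongrightarrow> \<Lambda> (p*q0 - q*p0) (q*d0 - p*b0) c ws) (at_right 0)"
    unfolding \<Omega>'_def by (rule Lim_transform_eventually)
qed

lemma recip_f_eq: "recip_f \<phi> r w p q = nc_mult (\<Lambda> p q \<i>) (nc_inverse (\<Lambda> (-q) p \<i>))"
proof -
  have "J_to_infty (Omega \<phi> r w p q) (of_int 0 / of_int 1) =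
     nc_mult (\<Lambda> p q (moebius 0 (-1) 1 0 \<i>)) (nc_inverse (\<Lambda> (p*0 - q*1) (q*0 - p*(-1)) \<i>))"
    by (rule J_to_infty_cusp[OF _ _ ii_in_upper_half]) simp_all
  moreover have "moebius 0 (-1) 1 0 \<i> = \<i>" by (simp add: moebius_def)
  ultimately show ?thesis by (simp add: recip_f_def)
qed

lemma recip_f_mult_swap: "nc_mult (recip_f \<phi> r w p q) (recip_f \<phi> r w (-q) p) = nc_one"
proof -
  have "\<Lambda> (-p) (-q) \<i> = \<Lambda> p q \<i>" using Omega_neg(1)[OF ev] by simp
  then show ?thesis unfolding recip_f_eq
    by (simp add: nc_mult_assoc nc_mult_inverse_cancel prim_at_infinity_Nil nc_inverse)
qed

lemma recip_f_neg: "recip_f \<phi> r w p (-q) = recip_f \<phi> r w (-p) q"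
  by (simp add: recip_f_def Omega_neg(2)[OF ev])

lemma prim_at_infinity_translate_chen:
  "\<Lambda> p (q - p * n) \<i> = nc_mult (\<Lambda> p q \<i>) (\<lambda>v. iter_prim (Omega \<phi> r w p q) (\<i> + of_int n) v \<i>)"
proof -
  have "\<i> + of_int n \<in> upper_half" by (simp add: mem_upper_half_iff)
  then show ?thesis
    using prim_at_infinity_translate[OF ii_in_upper_half] prim_at_infinity_chen[OF Omega_forms ii_in_upper_half]
    by simp
qed

text \<open>Chen's relation along \<open>i - 1 \<rightarrow> h \<rightarrow> i\<close>, where \<open>h = (i-1)/2\<close> is the image of \<open>i + 1\<close>
  under \<open>z \<mapsto> -1/z\<close> and of \<open>i\<close> under \<open>z \<mapsto> z/(1-z)\<close>: the two pieces are the translation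
  corrections of \<open>\<Lambda>(-q,p)\<close> and \<open>\<Lambda>(p+q,q)\<close>.\<close>
lemma recip_f_add: "nc_mult (recip_f \<phi> r w p (p + q)) (recip_f \<phi> r w (p + q) q) = recip_f \<phi> r w p q"
proof -
  define h where "h = (\<i> - 1) / 2"
  have hH: "h \<in> upper_half" and H: "\<i> - 1 \<in> upper_half" "\<i> + 1 \<in> upper_half"
    by (simp_all add: h_def mem_upper_half_iff)
  define G1 where "G1 = (\<lambda>v. iter_prim (Omega \<phi> r w p q) (\<i> - 1) v \<i>)"
  define G2 where "G2 = (\<lambda>v. iter_prim (Omega \<phi> r w (p+q) q) (\<i> + 1) v \<i>)"
  define G3 where "G3 = (\<lambda>v. iter_prim (Omega \<phi> r w (-q) p) (\<i> + 1) v \<i>)"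
  have a1: "\<Lambda> p (p+q) \<i> = nc_mult (\<Lambda> p q \<i>) G1"
    using prim_at_infinity_translate_chen[of p q "-1"] by (simp add: G1_def add.commute)
  have a2: "\<Lambda> (-(p+q)) p \<i> = nc_mult (\<Lambda> (p+q) q \<i>) G2"
    using prim_at_infinity_translate_chen[of "p+q" q 1] Omega_neg(1)[OF ev, of \<phi> r "p+q" "-p"]
    by (simp add: G2_def)
  have a3: "\<Lambda> (-q) (p+q) \<i> = nc_mult (\<Lambda> (-q) p \<i>) G3"
    using prim_at_infinity_translate_chen[of "-q" p 1] by (simp add: G3_def add.commute)
  have g3: "G3 v = iter_prim (Omega \<phi> r w p q) h v \<i>" for v
  proof -
    have "\<i> + 1 \<noteq> 0" by (simp add: complex_eq_iff)
    then have "moebius 0 (-1) 1 0 (\<i> + 1) = h" "moebius 0 (-1) 1 0 \<i> = \<i>"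
      by (simp_all add: moebius_def h_def field_simps)
    moreover have "iter_prim (Omega \<phi> r w p q) (moebius 0 (-1) 1 0 (\<i> + 1)) v (moebius 0 (-1) 1 0 \<i>) =
        iter_prim (Omega \<phi> r w (p*0 - q*1) (q*0 - p*(-1))) (\<i> + 1) v \<i>"
      by (rule iter_prim_Omega_moebius[OF _ H(2) ii_in_upper_half]) simp
    ultimately show ?thesis by (simp add: G3_def)
  qed
  have g2: "G2 v = iter_prim (Omega \<phi> r w p q) (\<i> - 1) v h" for v
  proof -
    have "1 - \<i> \<noteq> 0" by (simp add: complex_eq_iff)
    then have "moebius 1 0 (-1) 1 (\<i> + 1) = \<i> - 1" "moebius 1 0 (-1) 1 \<i> = h"
      by (simp_all add: moebius_def h_def field_simps)
    moreover have "iter_prim (Omega \<phi> r w p q) (moebius 1 0 (-1) 1 (\<i> + 1)) v (moebius 1 0 (-1) 1 \<i>) =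
        iter_prim (Omega \<phi> r w (p*1 - q*(-1)) (q*1 - p*0)) (\<i> + 1) v \<i>"
      by (rule iter_prim_Omega_moebius[OF _ H(2) ii_in_upper_half]) simp
    ultimately show ?thesis by (simp add: G2_def)
  qed
  have g1: "G1 = nc_mult G3 G2"
    unfolding G1_def g2 g3 by (rule ext, rule iter_prim_chen[OF Omega_forms(1) hH H(1) ii_in_upper_half])
  have N: "\<Lambda> (p+q) q \<i> [] = 1" "\<Lambda> (-q) p \<i> [] = 1" "G2 [] = 1" "G3 [] = 1" "\<Lambda> p q \<i> [] = 1"
    by (simp_all add: G2_def G3_def prim_at_infinity_Nil)
  have "nc_mult (recip_f \<phi> r w p (p + q)) (recip_f \<phi> r w (p + q) q) =
      nc_mult (nc_mult (\<Lambda> p q \<i>) G1)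
        (nc_mult (nc_inverse (nc_mult (\<Lambda> (p+q) q \<i>) G2))
          (nc_mult (\<Lambda> (p+q) q \<i>) (nc_inverse (nc_mult (\<Lambda> (-q) p \<i>) G3))))"
    unfolding recip_f_eq a1 a2[unfolded minus_add_distrib[symmetric]] by (simp add: nc_mult_assoc a3)
  also have "\<dots> = nc_mult (\<Lambda> p q \<i>) (nc_inverse (\<Lambda> (-q) p \<i>))"
    unfolding g1 using N
    by (simp add: nc_inverse_mult nc_mult_assoc nc_mult_cancel_inverse nc_mult_inverse_cancel)
  finally show ?thesis by (simp add: recip_f_eq)
qed

lemma dedekind_D_eq:
  assumes "p \<noteq> 0" "q * d0 - b0 * p = 1" "c \<in> upper_half"
  shows "dedekind_D \<phi> r w p q = nc_mult (\<Lambda> p q (moebius q b0 p d0 c)) (nc_inverse (\<Lambda> 0 1 c))"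
proof -
  have "p*q - q*p = 0" "q*d0 - p*b0 = 1" using assms(2) by (simp_all add: algebra_simps)
  then show ?thesis
    using J_to_infty_cusp[OF assms(2,1,3), of p q] assms(1) by (simp add: dedekind_D_def)
qed

lemma dedekind_D_translate:
  assumes "coprime p q"
  shows "dedekind_D \<phi> r w p q = dedekind_D \<phi> r w p (q + p)"
proof (cases "p = 0")
  case True
  then show ?thesis by (simp add: dedekind_D_def)
next
  case False
  obtain b0 d0 where det: "q * d0 - b0 * p = 1" using coprime_unimodular_row[OF assms] .
  have det2: "(q + p) * d0 - (b0 + d0) * p = 1" using det by (simp add: algebra_simps)
  define a where "a = moebius q b0 p d0 \<i>"
  have aH: "a \<in> upper_half" unfolding a_def by (rule moebius_in_upper_half[OF det ii_in_upper_half])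
  have "moebius 1 1 0 1 (moebius q b0 p d0 \<i>) =
      moebius (1*q + 1*p) (1*b0 + 1*d0) (0*q + 1*p) (0*b0 + 1*d0) \<i>"
    by (rule moebius_compose[OF det ii_in_upper_half])
  then have m: "moebius (q + p) (b0 + d0) p d0 \<i> = a + 1" by (simp add: a_def moebius_def)
  have "\<Lambda> p (q - p * (-1)) (a + 1) = \<Lambda> p q (a + 1 + of_int (-1))"
    by (rule prim_at_infinity_translate) (use aH in \<open>simp add: mem_upper_half_iff\<close>)
  then have l: "\<Lambda> p (q + p) (a + 1) = \<Lambda> p q a" by (simp add: add.commute)
  show ?thesis
    using dedekind_D_eq[OF False det ii_in_upper_half] dedekind_D_eq[OF False det2 ii_in_upper_half]
    unfolding a_def[symmetric] m l by simp
qed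

lemma dedekind_D_neg: "dedekind_D \<phi> r w p (-q) = dedekind_D \<phi> r w (-p) q"
proof (cases "p = 0")
  case False
  have "(of_int (-q) / of_int p :: real) = of_int q / of_int (-p)" by simp
  then show ?thesis using False by (simp add: dedekind_D_def Omega_neg(2)[OF ev])
qed (simp add: dedekind_D_def)

lemma nc_inverse_recip_f: "nc_inverse (recip_f \<phi> r w q 0) = recip_f \<phi> r w 0 q"
proof (rule nc_inverse_unique)
  show "nc_mult (recip_f \<phi> r w q 0) (recip_f \<phi> r w 0 q) = nc_one"
    using recip_f_mult_swap[of q 0] by simp
  show "nc_mult (recip_f \<phi> r w 0 q) (recip_f \<phi> r w q 0) = nc_one"
    using recip_f_mult_swap[of 0 q] recip_f_neg[of q 0] by simp
qed

text \<open>With \<open>c = \<gamma>\<^sup>-\<^sup>1 i\<close> for \<open>\<gamma> = (q b\<^sub>0; p d\<^sub>0)\<close>, both symbols are expressed through the same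
  factor \<open>\<Lambda>(0,1)(c)\<close>, which cancels.\<close>
lemma dedekind_D_reciprocity:
  assumes "coprime p q"
  shows "nc_mult (dedekind_D \<phi> r w p q) (nc_inverse (dedekind_D \<phi> r w q (- p))) = recip_f \<phi> r w p q"
proof (cases "p = 0 \<or> q = 0")
  case True
  then consider "p = 0" "q \<noteq> 0" | "q = 0" "p \<noteq> 0" using assms by fastforce
  then show ?thesis
  proof cases
    case 1
    then have "dedekind_D \<phi> r w q (- p) = recip_f \<phi> r w q 0" by (simp add: dedekind_D_def recip_f_def)
    then show ?thesis using 1 by (simp add: dedekind_D_def nc_inverse_recip_f)
  next
    case 2
    then show ?thesis by (simp add: dedekind_D_def recip_f_def)
  qed
next
  case False
  then have p: "p \<noteq> 0" and q: "q \<noteq> 0" by auto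
  obtain b0 d0 where det: "q * d0 - b0 * p = 1" using coprime_unimodular_row[OF assms] .
  have detc: "d0 * q - (- b0) * (- p) = 1" and det2: "(- p) * b0 - (- d0) * q = 1"
    using det by (simp_all add: algebra_simps)
  define c where "c = moebius d0 (- b0) (- p) q \<i>"
  have cH: "c \<in> upper_half" unfolding c_def by (rule moebius_in_upper_half[OF detc ii_in_upper_half])
  have m1: "moebius q b0 p d0 c = \<i>"
  proof -
    have "moebius q b0 p d0 c =
        moebius (q*d0 + b0*(-p)) (q*(-b0) + b0*q) (p*d0 + d0*(-p)) (p*(-b0) + d0*q) \<i>"
      unfolding c_def by (rule moebius_compose[OF detc ii_in_upper_half])
    also have "\<dots> = moebius 1 0 0 1 \<i>" using det by (simp add: algebra_simps)
    finally show ?thesis by (simp add: moebius_def)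
  qed
  have m2: "moebius (-p) (-d0) q b0 c = \<i>"
  proof -
    have "moebius (-p) (-d0) q b0 c =
        moebius ((-p)*d0 + (-d0)*(-p)) ((-p)*(-b0) + (-d0)*q) (q*d0 + b0*(-p)) (q*(-b0) + b0*q) \<i>"
      unfolding c_def by (rule moebius_compose[OF detc ii_in_upper_half])
    also have "\<dots> = moebius 0 (-1) 1 0 \<i>" using det by (simp add: algebra_simps)
    finally show ?thesis by (simp add: moebius_def)
  qed
  define X where "X = \<Lambda> 0 1 c"
  have X: "X [] = 1" by (simp add: X_def prim_at_infinity_Nil)
  have D1: "dedekind_D \<phi> r w p q = nc_mult (\<Lambda> p q \<i>) (nc_inverse X)"
    using dedekind_D_eq[OF p det cH] by (simp add: m1 X_def)
  have D2: "dedekind_D \<phi> r w q (-p) = nc_mult (\<Lambda> (-q) p \<i>) (nc_inverse X)"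
    using dedekind_D_eq[OF q det2 cH] by (simp add: m2 X_def Omega_neg(2)[OF ev])
  have N: "\<Lambda> (-q) p \<i> [] = 1" "nc_inverse X [] = 1"
    by (simp_all add: prim_at_infinity_Nil nc_inverse_Nil[of X, OF X])
  show ?thesis unfolding D1 D2 recip_f_eq
    using N X by (simp add: nc_inverse_mult nc_inverse_inverse nc_mult_assoc nc_mult_inverse_cancel)
qed

end

theorem theorem2p2:
  fixes w r :: nat and \<phi> :: "nat \<Rightarrow> complex \<Rightarrow> complex"
  assumes "even w"
    and "cusp_form_basis (w + 2) r \<phi>"
  shows "reciprocity_function r (recip_f \<phi> r w)
       \<and> dedekind_symbol r (recip_f \<phi> r w) (dedekind_D \<phi> r w)"
proof
  note basis = assms(2) and ev = assms(1)
  show "reciprocity_function r (recip_f \<phi> r w)"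
    unfolding reciprocity_function_def
    using recip_f_neg[OF basis ev] recip_f_mult_swap[OF basis ev] recip_f_add[OF basis ev]
    by (auto simp: recip_f_def J_to_infty_in_nc_group)
  have "dedekind_D \<phi> r w p q \<in> nc_group r" for p q
    by (simp add: dedekind_D_def J_to_infty_in_nc_group nc_one_in_group)
  then show "dedekind_symbol r (recip_f \<phi> r w) (dedekind_D \<phi> r w)"
    unfolding dedekind_symbol_def
    using dedekind_D_translate[OF basis ev] dedekind_D_neg[OF basis ev] dedekind_D_reciprocity[OF basis ev]
    by (auto simp: W_def)
qed

end
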